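(* Let $\lambda>0$ and let $f(x)=ax^{\lambda}+b+\int_0^\infty\gamma(\lambda,xt)\,\frac{d\mu(t)}{t^{\lambda}}$, $x>0$, where $a,b\ge 0$ and $\mu$ is a positive measure on $(0,\infty)$ for which the integral converges for all $x>0$. For each positive integer $n$ define $$f_n(x)=ax^{\lambda}+b+\frac{\Gamma(\lambda+n)}{\Gamma(n)}\int_0^\infty B\Big(\lambda,n;\frac{x}{x+n/t}\Big)\frac{d\mu(t)}{t^{\lambda}}.$$ Then $f_n\in\mathcal T_{\lambda,1-n}$ for each $n$, and $\lim_{n\to\infty}f_n(x)=f(x)$ for all $x>0$.
   Context: $\gamma(\lambda,x)=\int_0^x e^{-t}t^{\lambda-1}\,dt$ is the incomplete gamma function and $B(a_1,a_2;u)=\int_0^u t^{a_1-1}(1-t)^{a_2-1}\,dt$ ($a_1>0$, $a_2\in\mathbb R$, $u\in[0,1)$) is the incomplete Beta function. A function $\varphi$ on $(0,\infty)$ is completely monotonic of order $\alpha$ if $x^{\alpha}\varphi(x)$ is completely monotonic. For $\lambda>0$ and $\alpha<\lambda+1$, $\mathcal T_{\lambda,\alpha}$ (the $(\lambda,\alpha)$-Thorin–Bernstein functions) is the class of functions of the form $f(x)=ax^{\lambda}+b+\int_0^\infty\gamma(\lambda,xt)\varphi(t)\,dt$ with $a,b\ge 0$ and $\varphi$ completely monotonic of order $\alpha$. *)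

theory Defs
  imports "HOL-Analysis.Analysis"
begin

definition inc_gamma :: "real \<Rightarrow> real \<Rightarrow> real" where
  "inc_gamma lam x = (LBINT t=0..x. exp (- t) * t powr (lam - 1))"

definition inc_beta :: "real \<Rightarrow> real \<Rightarrow> real \<Rightarrow> real" where
  "inc_beta a1 a2 u = (LBINT t=0..u. t powr (a1 - 1) * (1 - t) powr (a2 - 1))"

definition completely_monotonic :: "(real \<Rightarrow> real) \<Rightarrow> bool" where
  "completely_monotonic \<phi> \<longleftrightarrow>
     (\<forall>k::nat. \<forall>x>0. (deriv ^^ k) \<phi> differentiable (at x)) \<and>
     (\<forall>k::nat. \<forall>x>0. (-1) ^ k * (deriv ^^ k) \<phi> x \<ge> 0)"

definition cm_order :: "real \<Rightarrow> (real \<Rightarrow> real) \<Rightarrow> bool" where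
  "cm_order \<alpha> \<phi> \<longleftrightarrow> completely_monotonic (\<lambda>x. x powr \<alpha> * \<phi> x)"

definition thorin_bernstein :: "real \<Rightarrow> real \<Rightarrow> (real \<Rightarrow> real) set" where
  "thorin_bernstein lam \<alpha> = {f. \<exists>a b \<phi>. a \<ge> 0 \<and> b \<ge> 0 \<and> cm_order \<alpha> \<phi> \<and>
     (\<forall>x>0. set_integrable lborel {0<..} (\<lambda>t. inc_gamma lam (x * t) * \<phi> t) \<and>
            f x = a * x powr lam + b + (\<integral>t\<in>{0<..}. inc_gamma lam (x * t) * \<phi> t \<partial>lborel))}"

end

theory Submission
  imports Defs
begin

(* Writing \<gamma>(\<lambda>, x r) = (x r)^\<lambda> \<integral>_0^1 w^(\<lambda>-1) e^(-x r w) dw and using Tonelli gives, for m, s > 0,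
     \<integral>_0^\<infinity> \<gamma>(\<lambda>, x r) s^m r^(m-1) e^(-s r) dr = \<Gamma>(\<lambda>+m) B(\<lambda>, m; x/(x+s)),
   the incomplete Beta function arising through the substitution u = x w/(x w + s).
   Taking m = n and s = n/t and integrating against d\<mu>(t)/t^\<lambda>, Tonelli turns f_n into
   a x^\<lambda> + b + \<integral>_0^\<infinity> \<gamma>(\<lambda>, x r) \<phi>_n(r) dr, where r^(1-n) \<phi>_n(r) is the Laplace transform of a
   positive measure and hence completely monotonic.
   For the limit, the substitution v = n u gives
     \<Gamma>(\<lambda>+n)/\<Gamma>(n) B(\<lambda>, n; y/(y+n)) = \<Gamma>(\<lambda>+n)/(\<Gamma>(n) n^\<lambda>) \<integral>_0^(n y/(y+n)) v^(\<lambda>-1) (1-v/n)^(n-1) dv,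
   which tends to \<gamma>(\<lambda>, y) by dominated convergence and is at most a constant multiple of \<gamma>(\<lambda>, y);
   dominated convergence in t then gives f_n(x) \<longrightarrow> f(x). *)

lemma ennreal_interval_integral_eq_nn_integral:
  fixes f :: "real \<Rightarrow> real"
  assumes f_meas: "f \<in> borel_measurable borel"
    and f_nonneg: "\<And>t. 0 < t \<Longrightarrow> t < u \<Longrightarrow> 0 \<le> f t"
    and u: "0 \<le> u"
    and finite: "(\<integral>\<^sup>+t. ennreal (indicator {0<..<u} t * f t) \<partial>lborel) < \<infinity>"
  shows "ennreal (LBINT t=0..u. f t) = (\<integral>\<^sup>+t. ennreal (indicator {0<..<u} t * f t) \<partial>lborel)"
proof -
  let ?g = "\<lambda>t. indicator {0<..<u} t * f t"
  have g_nonneg: "0 \<le> ?g t" for t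
    using f_nonneg by (simp add: indicator_def)
  have "integrable lborel ?g"
    using f_meas g_nonneg finite by (intro integrableI_nonneg) auto
  then have "(\<integral>\<^sup>+t. ennreal (?g t) \<partial>lborel) = ennreal (integral\<^sup>L lborel ?g)"
    using g_nonneg by (intro nn_integral_eq_integral) auto
  moreover have "(LBINT t=0..u. f t) = integral\<^sup>L lborel ?g"
    using u by (subst interval_integral_Ioo) (auto simp: set_lebesgue_integral_def)
  ultimately show ?thesis by simp
qed

lemma inc_gamma_nn_integral:
  assumes lam: "lam > 0" and y: "0 \<le> y"
  shows "ennreal (inc_gamma lam y) =
    (\<integral>\<^sup>+v. ennreal (indicator {0<..<y} v * (exp (- v) * v powr (lam - 1))) \<partial>lborel)"
  unfolding inc_gamma_def
proof (rule ennreal_interval_integral_eq_nn_integral[OF _ _ y])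
  have "(\<integral>\<^sup>+v. ennreal (indicator {0<..<y} v * (exp (- v) * v powr (lam - 1))) \<partial>lborel)
      \<le> (\<integral>\<^sup>+v. ennreal (indicator {0..} v * v powr (lam - 1) / exp v) \<partial>lborel)"
  proof (intro nn_integral_mono ennreal_leI)
    fix v :: real
    show "indicator {0<..<y} v * (exp (- v) * v powr (lam - 1)) \<le> indicator {0..} v * v powr (lam - 1) / exp v"
      by (cases "0 < v \<and> v < y") (auto simp: indicator_def exp_minus divide_inverse mult.commute)
  qed
  also have "\<dots> = ennreal (Gamma lam)"
    using Gamma_conv_nn_integral_real[OF lam] by simp
  finally show "(\<integral>\<^sup>+v. ennreal (indicator {0<..<y} v * (exp (- v) * v powr (lam - 1))) \<partial>lborel) < \<infinity>"
    using le_less_trans[OF _ ennreal_less_top] by simp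
qed auto

lemma nn_integral_Beta_integrand_le_Beta:
  assumes "lam > 0" "m > 0" "u \<le> 1"
  shows "(\<integral>\<^sup>+v. ennreal (indicator {0<..<u} v * (v powr (lam - 1) * (1 - v) powr (m - 1))) \<partial>lborel)
    \<le> ennreal (Beta lam m)"
proof -
  have "(\<integral>\<^sup>+v. ennreal (indicator {0<..<u} v * (v powr (lam - 1) * (1 - v) powr (m - 1))) \<partial>lborel)
      \<le> (\<integral>\<^sup>+v. ennreal (v powr (lam - 1) * (1 - v) powr (m - 1)) * indicator {0..1} v \<partial>lborel)"
    using assms by (intro nn_integral_mono) (auto simp: indicator_def)
  also have "\<dots> = ennreal (Beta lam m)"
    by (rule nn_integral_has_integral_lebesgue'[OF _ has_integral_Beta_real[OF assms(1,2)]]) simp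
  finally show ?thesis .
qed

lemma inc_beta_nn_integral:
  assumes lam: "lam > 0" and m: "m > 0" and u: "0 \<le> u" "u \<le> 1"
  shows "ennreal (inc_beta lam m u) =
    (\<integral>\<^sup>+v. ennreal (indicator {0<..<u} v * (v powr (lam - 1) * (1 - v) powr (m - 1))) \<partial>lborel)"
  unfolding inc_beta_def
proof (rule ennreal_interval_integral_eq_nn_integral[OF _ _ u(1)])
  show "(\<integral>\<^sup>+v. ennreal (indicator {0<..<u} v * (v powr (lam - 1) * (1 - v) powr (m - 1))) \<partial>lborel) < \<infinity>"
    using le_less_trans[OF nn_integral_Beta_integrand_le_Beta[OF lam m u(2)] ennreal_less_top] by simp
qed auto

lemma inc_gamma_nonneg:
  assumes "0 \<le> y"
  shows "0 \<le> inc_gamma lam y"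
  unfolding inc_gamma_def using assms
  by (subst interval_integral_Ioo)
    (auto simp: set_lebesgue_integral_def indicator_def intro!: Bochner_Integration.integral_nonneg)

lemma inc_beta_nonneg:
  assumes "0 \<le> u" "u \<le> 1"
  shows "0 \<le> inc_beta lam m u"
  unfolding inc_beta_def using assms
  by (subst interval_integral_Ioo)
    (auto simp: set_lebesgue_integral_def indicator_def intro!: Bochner_Integration.integral_nonneg)

lemma inc_gamma_mono:
  assumes lam: "lam > 0" and "0 \<le> y" "y \<le> y'"
  shows "inc_gamma lam y \<le> inc_gamma lam y'"
proof -
  have "ennreal (inc_gamma lam y) \<le> ennreal (inc_gamma lam y')"
    using assms unfolding inc_gamma_nn_integral[OF lam assms(2)] inc_gamma_nn_integral[OF lam order.trans[OF assms(2,3)]]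
    by (intro nn_integral_mono ennreal_leI) (auto simp: indicator_def)
  then show ?thesis
    using inc_gamma_nonneg[of y' lam] assms by simp
qed

lemma inc_beta_mono:
  assumes lam: "lam > 0" and m: "m > 0" and "0 \<le> u" "u \<le> u'" "u' \<le> 1"
  shows "inc_beta lam m u \<le> inc_beta lam m u'"
proof -
  have "ennreal (inc_beta lam m u) \<le> ennreal (inc_beta lam m u')"
    using assms
    unfolding inc_beta_nn_integral[OF lam m assms(3) order.trans[OF assms(4,5)]]
      inc_beta_nn_integral[OF lam m order.trans[OF assms(3,4)] assms(5)]
    by (intro nn_integral_mono ennreal_leI) (auto simp: indicator_def)
  then show ?thesis
    using inc_beta_nonneg[of u' lam m] assms by simp
qed

lemma nn_integral_powr_Ioo:
  assumes lam: "lam > 0" and u: "0 \<le> u"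
  shows "(\<integral>\<^sup>+v. ennreal (indicator {0<..<u} v * v powr (lam - 1)) \<partial>lborel) = ennreal (u powr lam / lam)"
proof -
  have "(\<integral>\<^sup>+v. ennreal (indicator {0<..<u} v * v powr (lam - 1)) \<partial>lborel)
      = (\<integral>\<^sup>+v. ennreal (v powr (lam - 1)) * indicator {0..u} v \<partial>lborel)"
    using AE_lborel_singleton[of u]
    by (intro nn_integral_cong_AE) (auto elim!: eventually_mono simp: indicator_def)
  also have "\<dots> = ennreal (u powr (lam - 1 + 1) / (lam - 1 + 1))"
    using lam u by (intro nn_integral_has_integral_lebesgue'[OF _ has_integral_powr_from_0]) auto
  finally show ?thesis by simp
qed

lemma inc_gamma_ge_min_powr:
  assumes lam: "lam > 0" and y: "y > 0"
  shows "exp (- 1) * (min y 1 powr lam / lam) \<le> inc_gamma lam y"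
proof -
  have "(\<integral>\<^sup>+v. ennreal (indicator {0<..<min y 1} v * v powr (lam - 1)) \<partial>lborel)
      = ennreal (min y 1 powr lam / lam)"
    using y by (intro nn_integral_powr_Ioo[OF lam]) simp
  then have "ennreal (exp (- 1) * (min y 1 powr lam / lam))
      = ennreal (exp (- 1)) * (\<integral>\<^sup>+v. ennreal (indicator {0<..<min y 1} v * v powr (lam - 1)) \<partial>lborel)"
    by (simp only: ennreal_mult' exp_ge_zero)
  also have "\<dots> = (\<integral>\<^sup>+v. ennreal (exp (- 1) * (indicator {0<..<min y 1} v * v powr (lam - 1))) \<partial>lborel)"
    by (subst nn_integral_cmult[symmetric]) (auto simp: ennreal_mult)
  also have "\<dots> \<le> (\<integral>\<^sup>+v. ennreal (indicator {0<..<y} v * (exp (- v) * v powr (lam - 1))) \<partial>lborel)"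
    by (intro nn_integral_mono ennreal_leI) (auto simp: indicator_def intro!: mult_right_mono)
  also have "\<dots> = ennreal (inc_gamma lam y)"
    using inc_gamma_nn_integral[OF lam] y by simp
  finally show ?thesis
    using inc_gamma_nonneg[of y lam] y by (simp add: ennreal_le_iff)
qed

lemma inc_gamma_pos:
  assumes "lam > 0" "y > 0"
  shows "0 < inc_gamma lam y"
  using inc_gamma_ge_min_powr[OF assms] assms by (smt (verit) divide_pos_pos exp_gt_zero min_def
      mult_pos_pos powr_gt_zero zero_less_one)

lemma inc_beta_le_powr:
  assumes lam: "lam > 0" and m: "m \<ge> 1" and u: "0 \<le> u" "u \<le> 1"
  shows "inc_beta lam m u \<le> u powr lam / lam"
proof -
  have m0: "m > 0"
    using m by simp
  have "ennreal (inc_beta lam m u) \<le> (\<integral>\<^sup>+v. ennreal (indicator {0<..<u} v * v powr (lam - 1)) \<partial>lborel)"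
    unfolding inc_beta_nn_integral[OF lam m0 u]
  proof (intro nn_integral_mono ennreal_leI)
    fix v :: real
    have "(1 - v) powr (m - 1) \<le> 1" if "0 < v" "v < u"
      using that m u by (intro powr_le1) auto
    then show "indicator {0<..<u} v * (v powr (lam - 1) * (1 - v) powr (m - 1))
        \<le> indicator {0<..<u} v * v powr (lam - 1)"
      by (auto simp: indicator_def intro: mult_left_le)
  qed
  also have "\<dots> = ennreal (u powr lam / lam)"
    by (rule nn_integral_powr_Ioo[OF lam u(1)])
  finally show ?thesis
    using lam by (simp add: ennreal_le_iff)
qed

lemma inc_beta_le_Beta:
  assumes lam: "lam > 0" and m: "m > 0" and u: "0 \<le> u" "u \<le> 1"
  shows "inc_beta lam m u \<le> Beta lam m"
proof -
  have "0 \<le> Beta lam m"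
    using lam m by (simp add: Beta_def)
  moreover have "ennreal (inc_beta lam m u) \<le> ennreal (Beta lam m)"
    using nn_integral_Beta_integrand_le_Beta[OF lam m u(2)] inc_beta_nn_integral[OF lam m u]
    by (rule ord_eq_le_trans[rotated])
  ultimately show ?thesis
    by (simp add: ennreal_le_iff)
qed

lemma integrable_indicator_powr:
  fixes lam y :: real
  assumes "lam > 0"
  shows "integrable lborel (\<lambda>v. indicator {0<..<y} v * v powr (lam - 1))"
proof (cases "0 \<le> y")
  case True
  then show ?thesis
    using nn_integral_powr_Ioo[of lam y] assms
    by (intro integrableI_nonneg) (auto simp: indicator_def)
qed (auto simp: indicator_def)

section \<open>Integrating the incomplete Gamma function against a Gamma density\<close>

lemma nn_integral_powr_exp_scaled:
  assumes a: "a > 0" and c: "c > 0"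
  shows "(\<integral>\<^sup>+r. ennreal (indicator {0<..} r * (r powr (a - 1) * exp (- (c * r)))) \<partial>lborel)
    = ennreal (Gamma a / c powr a)"
proof -
  let ?I = "\<integral>\<^sup>+r. ennreal (indicator {0<..} r * (r powr (a - 1) * exp (- (c * r)))) \<partial>lborel"
  have pointwise: "indicator {0..} (c * r) * (c * r) powr (a - 1) / exp (c * r)
      = c powr (a - 1) * (indicator {0<..} r * (r powr (a - 1) * exp (- (c * r))))" for r
  proof (cases "r > 0")
    case True
    then show ?thesis
      using c by (simp add: indicator_def powr_mult exp_minus divide_inverse mult_ac)
  next
    case False
    then have "c * r \<le> 0"
      using c by (simp add: mult_le_0_iff)
    then show ?thesis
      using False by (cases "c * r = 0") (auto simp: indicator_def)
  qed
  have "ennreal (Gamma a)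
      = ennreal c * (\<integral>\<^sup>+r. ennreal (c powr (a - 1) * (indicator {0<..} r * (r powr (a - 1) * exp (- (c * r))))) \<partial>lborel)"
    unfolding Gamma_conv_nn_integral_real[OF a]
    using c by (subst nn_integral_real_affine[where c=c and t=0]) (simp_all add: pointwise)
  also have "\<dots> = ennreal (c * c powr (a - 1)) * ?I"
    using c by (simp add: ennreal_mult' nn_integral_cmult mult.assoc)
  also have "c * c powr (a - 1) = c powr a"
    using c by (simp add: powr_mult_base)
  finally have eq: "ennreal (Gamma a) = ennreal (c powr a) * ?I" .
  have "ennreal (Gamma a / c powr a) = ennreal (Gamma a) / ennreal (c powr a)"
    using a c by (intro divide_ennreal[symmetric]) (auto simp: Gamma_real_pos less_imp_le)
  also have "\<dots> = ?I"
    unfolding eq using c by (subst mult.commute) (intro ennreal_mult_divide_eq, auto)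
  finally show ?thesis ..
qed

lemma inc_gamma_eq_unit_integral:
  assumes lam: "lam > 0" and y: "y > 0"
  shows "ennreal (inc_gamma lam y) = ennreal (y powr lam) *
    (\<integral>\<^sup>+w. ennreal (indicator {0<..<1} w * (w powr (lam - 1) * exp (- (y * w)))) \<partial>lborel)"
proof -
  have pointwise: "indicator {0<..<y} (y * w) * (exp (- (y * w)) * (y * w) powr (lam - 1))
      = y powr (lam - 1) * (indicator {0<..<1} w * (w powr (lam - 1) * exp (- (y * w))))" for w
    using y by (auto simp: indicator_def powr_mult zero_less_mult_iff)
  have "ennreal (inc_gamma lam y) = ennreal y *
      (\<integral>\<^sup>+w. ennreal (y powr (lam - 1) * (indicator {0<..<1} w * (w powr (lam - 1) * exp (- (y * w))))) \<partial>lborel)"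
    unfolding inc_gamma_nn_integral[OF lam less_imp_le[OF y]]
    using y by (subst nn_integral_real_affine[where c=y and t=0]) (simp_all add: pointwise)
  also have "\<dots> = ennreal (y * y powr (lam - 1)) *
      (\<integral>\<^sup>+w. ennreal (indicator {0<..<1} w * (w powr (lam - 1) * exp (- (y * w)))) \<partial>lborel)"
    using y by (simp add: ennreal_mult' nn_integral_cmult mult.assoc)
  also have "y * y powr (lam - 1) = y powr lam"
    using y by (simp add: powr_mult_base)
  finally show ?thesis .
qed

lemma Beta_integrand_substitution:
  fixes lam m x s w :: real
  assumes x: "0 < x" and s: "0 < s" and w: "0 < w"
  shows "(x * w / (x * w + s)) powr (lam - 1) * (1 - x * w / (x * w + s)) powr (m - 1) * (x * s / (x * w + s)\<^sup>2)
    = x powr lam * w powr (lam - 1) * s powr m / (x * w + s) powr (lam + m)"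
proof -
  define D where "D = x * w + s"
  have D: "D > 0"
    using x s w by (simp add: D_def add_pos_pos)
  have q: "1 - x * w / D = s / D"
    using D by (simp add: D_def field_simps)
  have p1: "(x * w / D) powr (lam - 1) = x powr (lam - 1) * w powr (lam - 1) / D powr (lam - 1)"
    using x w D by (simp add: powr_divide powr_mult)
  have p2: "(s / D) powr (m - 1) = s powr (m - 1) / D powr (m - 1)"
    using s D by (simp add: powr_divide)
  have p3: "x powr lam = x * x powr (lam - 1)" and p4: "s powr m = s * s powr (m - 1)"
    using x s by (simp_all add: powr_mult_base)
  have "D powr (lam + m) = D powr ((lam - 1) + (m - 1) + 2)"
    by simp
  also have "\<dots> = D powr (lam - 1) * D powr (m - 1) * D\<^sup>2"
    using D by (simp only: powr_add powr_numeral)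
  finally have p5: "D powr (lam + m) = D powr (lam - 1) * D powr (m - 1) * D\<^sup>2" .
  have "D powr (lam - 1) > 0" "D powr (m - 1) > 0"
    using D by simp_all
  then show ?thesis
    unfolding D_def[symmetric] q p1 p2 p3 p4 p5 using D by (simp add: field_simps)
qed

lemma inc_beta_eq_unit_integral:
  assumes lam: "lam > 0" and m: "m > 0" and x: "x > 0" and s: "s > 0"
  shows "ennreal (inc_beta lam m (x / (x + s))) = (\<integral>\<^sup>+w. ennreal (indicator {0<..<1} w *
    (x powr lam * w powr (lam - 1) * s powr m / (x * w + s) powr (lam + m))) \<partial>lborel)"
proof -
  define g where "g w = x * w / (x * w + s)" for w
  define g' where "g' w = x * s / (x * w + s)\<^sup>2" for w
  define \<beta> where "\<beta> u = u powr (lam - 1) * (1 - u) powr (m - 1)" for u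
  have pos: "x * w + s > 0" if "w \<in> {0..1}" for w
    using that x s by (intro add_nonneg_pos) auto
  have g_deriv: "(g has_real_derivative g' w) (at w)" if "w \<in> {0..1}" for w
    unfolding g_def g'_def using pos[OF that]
    by (auto intro!: derivative_eq_intros simp: field_simps power2_eq_square)
  have g'_cont: "continuous_on {0..1} g'"
    unfolding g'_def using pos by (intro continuous_intros) (auto dest!: pos simp del: atLeastAtMost_iff)
  have substituted: "\<beta> (g w) * g' w = x powr lam * w powr (lam - 1) * s powr m / (x * w + s) powr (lam + m)"
    if "0 < w" for w
    unfolding \<beta>_def g_def g'_def using x s that by (rule Beta_integrand_substitution)
  have u: "0 \<le> x / (x + s)" "x / (x + s) \<le> 1"
    using x s by simp_all
  have "ennreal (inc_beta lam m (x / (x + s)))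
      = (\<integral>\<^sup>+u. ennreal (\<beta> u * indicator {g 0..g 1} u) \<partial>lborel)"
    unfolding inc_beta_nn_integral[OF lam m u] using x s AE_lborel_singleton[of 0] AE_lborel_singleton[of "x / (x + s)"]
    by (intro nn_integral_cong_AE) (auto simp: \<beta>_def g_def indicator_def elim!: eventually_mono)
  also have "\<dots> = (\<integral>\<^sup>+w. ennreal (\<beta> (g w) * g' w * indicator {0..1} w) \<partial>lborel)"
    using x s by (intro nn_integral_substitution g_deriv g'_cont) (auto simp: \<beta>_def g'_def set_borel_measurable_def)
  also have "\<dots> = (\<integral>\<^sup>+w. ennreal (indicator {0<..<1} w *
      (x powr lam * w powr (lam - 1) * s powr m / (x * w + s) powr (lam + m))) \<partial>lborel)"
  proof (intro nn_integral_cong_AE)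
    have "AE w in lborel. w \<noteq> 0 \<and> w \<noteq> 1"
      by (simp add: AE_conj_iff AE_lborel_singleton)
    then show "AE w in lborel. ennreal (\<beta> (g w) * g' w * indicator {0..1} w) = ennreal (indicator {0<..<1} w *
        (x powr lam * w powr (lam - 1) * s powr m / (x * w + s) powr (lam + m)))"
      by eventually_elim (auto simp: substituted indicator_def)
  qed
  finally show ?thesis .
qed

lemma inc_gamma_mult_Gamma_density_eq_nn_integral:
  assumes lam: "lam > 0" and x: "x > 0" and r: "r > 0"
  shows "ennreal (inc_gamma lam (x * r) * (s powr m * r powr (m - 1) * exp (- (s * r)))) =
    (\<integral>\<^sup>+w. ennreal (indicator {0<..<1} w *
      (x powr lam * w powr (lam - 1) * s powr m * (r powr (lam + m - 1) * exp (- ((x * w + s) * r))))) \<partial>lborel)"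
    (is "_ = (\<integral>\<^sup>+w. ennreal (?H w) \<partial>lborel)")
proof -
  let ?d = "s powr m * r powr (m - 1) * exp (- (s * r))"
  let ?c = "?d * (x * r) powr lam"
  have pointwise: "?c * (indicator {0<..<1} w * (w powr (lam - 1) * exp (- (x * r * w)))) = ?H w" for w
  proof -
    have "lam + m - 1 = lam + (m - 1)"
      by simp
    then have "r powr (lam + m - 1) = r powr lam * r powr (m - 1)"
      by (simp only: powr_add)
    moreover have "exp (- (s * r)) * exp (- (x * r * w)) = exp (- ((x * w + s) * r))"
      by (simp add: exp_add[symmetric] algebra_simps)
    ultimately show ?thesis
      using r x by (simp add: powr_mult mult_ac)
  qed
  have "ennreal (inc_gamma lam (x * r) * ?d) = ennreal ?d * ennreal (inc_gamma lam (x * r))"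
    using inc_gamma_nonneg[of "x * r" lam] x r by (simp add: ennreal_mult mult.commute)
  also have "\<dots> = ennreal ?d * (ennreal ((x * r) powr lam) *
      (\<integral>\<^sup>+w. ennreal (indicator {0<..<1} w * (w powr (lam - 1) * exp (- (x * r * w)))) \<partial>lborel))"
    by (simp only: inc_gamma_eq_unit_integral[OF lam mult_pos_pos[OF x r]])
  also have "\<dots> = ennreal ?c *
      (\<integral>\<^sup>+w. ennreal (indicator {0<..<1} w * (w powr (lam - 1) * exp (- (x * r * w)))) \<partial>lborel)"
    by (simp add: ennreal_mult' mult.assoc)
  also have "\<dots> = (\<integral>\<^sup>+w. ennreal (?c * (indicator {0<..<1} w * (w powr (lam - 1) * exp (- (x * r * w))))) \<partial>lborel)"
    using r x by (subst nn_integral_cmult[symmetric]) (auto simp: ennreal_mult')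
  also have "\<dots> = (\<integral>\<^sup>+w. ennreal (?H w) \<partial>lborel)"
    by (simp only: pointwise)
  finally show ?thesis .
qed

lemma nn_integral_inc_gamma_Gamma_density:
  assumes lam: "lam > 0" and m: "m > 0" and x: "x > 0" and s: "s > 0"
  shows "(\<integral>\<^sup>+r. ennreal (indicator {0<..} r * inc_gamma lam (x * r) *
      (s powr m * r powr (m - 1) * exp (- (s * r)))) \<partial>lborel)
    = ennreal (Gamma (lam + m) * inc_beta lam m (x / (x + s)))"
proof -
  define H where "H r w = indicator {0<..} r * (indicator {0<..<1} w *
    (x powr lam * w powr (lam - 1) * s powr m * (r powr (lam + m - 1) * exp (- ((x * w + s) * r)))))" for r w
  define \<beta> where "\<beta> w = x powr lam * w powr (lam - 1) * s powr m / (x * w + s) powr (lam + m)" for w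
  have inner_w: "ennreal (indicator {0<..} r * inc_gamma lam (x * r) * (s powr m * r powr (m - 1) * exp (- (s * r))))
      = (\<integral>\<^sup>+w. ennreal (H r w) \<partial>lborel)" for r
  proof (cases "0 < r")
    case True
    then show ?thesis
      using inc_gamma_mult_Gamma_density_eq_nn_integral[OF lam x True, of s m] by (simp add: H_def mult.assoc)
  qed (simp add: H_def)
  have inner_r: "(\<integral>\<^sup>+r. ennreal (H r w) \<partial>lborel) = ennreal (Gamma (lam + m)) * ennreal (indicator {0<..<1} w * \<beta> w)" for w
  proof (cases "0 < w \<and> w < 1")
    case True
    define C where "C = x powr lam * w powr (lam - 1) * s powr m"
    have C: "0 \<le> C" and xws: "0 < x * w + s"
      using True x s by (simp_all add: C_def add_pos_pos)
    have "(\<integral>\<^sup>+r. ennreal (H r w) \<partial>lborel) = ennreal C *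
        (\<integral>\<^sup>+r. ennreal (indicator {0<..} r * (r powr (lam + m - 1) * exp (- ((x * w + s) * r)))) \<partial>lborel)"
      using True C by (subst nn_integral_cmult[symmetric]) (auto simp: H_def C_def ennreal_mult'[symmetric] intro!: nn_integral_cong)
    also have "\<dots> = ennreal C * ennreal (Gamma (lam + m) / (x * w + s) powr (lam + m))"
      using nn_integral_powr_exp_scaled[of "lam + m" "x * w + s"] lam m xws by simp
    finally show ?thesis
      using True C xws lam m by (simp add: \<beta>_def C_def ennreal_mult'[symmetric] less_imp_le)
  qed (auto simp: H_def)
  have "(\<lambda>(r, w). ennreal (H r w)) \<in> borel_measurable (lborel \<Otimes>\<^sub>M lborel)"
    unfolding H_def by measurable
  then have swap: "(\<integral>\<^sup>+r. (\<integral>\<^sup>+w. ennreal (H r w) \<partial>lborel) \<partial>lborel) = (\<integral>\<^sup>+w. (\<integral>\<^sup>+r. ennreal (H r w) \<partial>lborel) \<partial>lborel)"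
    by (rule lborel_pair.Fubini'[symmetric])
  have "(\<integral>\<^sup>+r. ennreal (indicator {0<..} r * inc_gamma lam (x * r) *
      (s powr m * r powr (m - 1) * exp (- (s * r)))) \<partial>lborel)
      = (\<integral>\<^sup>+w. ennreal (Gamma (lam + m)) * ennreal (indicator {0<..<1} w * \<beta> w) \<partial>lborel)"
    by (simp only: inner_w inner_r swap)
  also have "\<dots> = ennreal (Gamma (lam + m)) * ennreal (inc_beta lam m (x / (x + s)))"
    unfolding inc_beta_eq_unit_integral[OF lam m x s] \<beta>_def by (rule nn_integral_cmult) measurable
  also have "\<dots> = ennreal (Gamma (lam + m) * inc_beta lam m (x / (x + s)))"
    using lam m by (simp add: ennreal_mult' less_imp_le)
  finally show ?thesis .
qed

section \<open>Incomplete Beta functions converge to the incomplete Gamma function\<close>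

lemma integrable_nonneg_le:
  fixes f g :: "'a \<Rightarrow> real"
  assumes g: "integrable M g" and f: "f \<in> borel_measurable M"
    and nonneg: "\<And>t. 0 \<le> f t" and le: "\<And>t. f t \<le> g t"
  shows "integrable M f"
proof (rule Bochner_Integration.integrable_bound[OF g f], intro AE_I2)
  fix t
  have "norm (f t) = f t"
    using nonneg by simp
  also have "\<dots> \<le> g t"
    by (rule le)
  also have "\<dots> \<le> norm (g t)"
    by simp
  finally show "norm (f t) \<le> norm (g t)" .
qed

lemma Gamma_add_div_Gamma_powr_LIMSEQ:
  assumes lam: "lam > 0"
  shows "(\<lambda>n. Gamma (lam + real n) / (Gamma (real n) * real n powr lam)) \<longlonglongrightarrow> 1"
proof -
  have not_nonpos_int: "lam \<notin> \<int>\<^sub>\<le>\<^sub>0"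
    using lam by (auto elim!: nonpos_Ints_cases)
  have Gamma_lam: "Gamma lam > 0"
    using lam by (rule Gamma_real_pos)
  have "(\<lambda>n. Gamma lam / Gamma_series' lam n) \<longlonglongrightarrow> Gamma lam / Gamma lam"
    using Gamma_lam by (intro tendsto_divide tendsto_const Gamma_series'_LIMSEQ) simp
  moreover have "eventually (\<lambda>n. Gamma lam / Gamma_series' lam n
      = Gamma (lam + real n) / (Gamma (real n) * real n powr lam)) sequentially"
    using eventually_gt_at_top[of "0::nat"]
  proof eventually_elim
    case (elim n)
    have "fact (n - 1) = Gamma (real n)"
      using Gamma_fact[of "n - 1", where 'a = real] elim by (simp add: of_nat_diff)
    moreover have "pochhammer lam n = Gamma (lam + real n) / Gamma lam"
      using pochhammer_Gamma[OF not_nonpos_int, of n] by simp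
    moreover have "exp (lam * ln (real n)) = real n powr lam"
      using elim by (simp add: powr_def)
    moreover have "Gamma (real n) > 0" "Gamma (lam + real n) > 0"
      using elim lam by auto
    ultimately show ?case
      using Gamma_lam elim unfolding Gamma_series'_def by (simp add: field_simps)
  qed
  ultimately show ?thesis
    using Gamma_lam by (simp add: tendsto_cong)
qed

lemma one_minus_div_powr_LIMSEQ:
  fixes v :: real
  shows "(\<lambda>n. (1 - v / real n) powr (real n - 1)) \<longlonglongrightarrow> exp (- v)"
proof -
  have "(\<lambda>n. (1 + (- v) / real n) ^ n / (1 - v * inverse (real n))) \<longlonglongrightarrow> exp (- v) / (1 - v * 0)"
    by (intro tendsto_intros tendsto_exp_limit_sequentially tendsto_inverse_0_at_top
        filterlim_real_sequentially) simp
  moreover obtain N :: nat where N: "real N > v"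
    using reals_Archimedean2 by blast
  have "eventually (\<lambda>n. (1 + (- v) / real n) ^ n / (1 - v * inverse (real n))
      = (1 - v / real n) powr (real n - 1)) sequentially"
    using eventually_ge_at_top[of "N + 1"]
  proof eventually_elim
    case (elim n)
    then have "1 - v / real n > 0"
      using N by (simp add: field_simps)
    then show ?case
      by (simp add: powr_diff powr_realpow divide_inverse)
  qed
  ultimately show ?thesis
    by (simp add: tendsto_cong)
qed

lemma scaled_beta_integrand_le:
  fixes m y v lam :: real
  assumes m: "1 \<le> m" and y: "0 < y"
  shows "indicator {0<..<m * y / (y + m)} v * (v powr (lam - 1) * (1 - v / m) powr (m - 1))
    \<le> indicator {0<..<y} v * v powr (lam - 1)"
proof (cases "0 < v \<and> v < m * y / (y + m)")
  case True
  have "m / (y + m) < 1" "y / (y + m) < 1"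
    using m y by (auto simp: divide_less_eq)
  then have "m * y / (y + m) < y" "m * y / (y + m) < m"
    using mult_strict_left_mono[of "m / (y + m)" 1 y] mult_strict_left_mono[of "y / (y + m)" 1 m] m y
    by (simp_all add: mult.commute)
  then have "v < y" "v < m"
    using True by linarith+
  then have "(1 - v / m) powr (m - 1) \<le> 1"
    using True m by (intro powr_le1) auto
  then show ?thesis
    using True \<open>v < y\<close> by (simp add: indicator_def mult_left_le)
qed (auto simp: indicator_def)

lemma Beta_integrand_rescaled:
  fixes m U v lam :: real
  assumes m: "0 < m"
  shows "indicator {0<..<U} (v / m) * ((v / m) powr (lam - 1) * (1 - v / m) powr (m - 1))
    = m powr (1 - lam) * (indicator {0<..<m * U} v * (v powr (lam - 1) * (1 - v / m) powr (m - 1)))"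
proof (cases "0 < v \<and> v < m * U")
  case True
  then have "0 < v / m \<and> v / m < U"
    using m by (simp add: divide_less_eq mult.commute)
  moreover have "(v / m) powr (lam - 1) = m powr (1 - lam) * v powr (lam - 1)"
  proof -
    have "(v / m) powr (lam - 1) = v powr (lam - 1) / m powr (lam - 1)"
      using m True by (simp add: powr_divide)
    moreover have "m powr (1 - lam) = inverse (m powr (lam - 1))"
      using powr_minus[of m "lam - 1"] by simp
    ultimately show ?thesis
      by (simp add: divide_inverse mult.commute)
  qed
  ultimately show ?thesis
    using True by simp
next
  case False
  then have "\<not> (0 < v / m \<and> v / m < U)"
    using m by (auto simp: divide_less_eq zero_less_divide_iff mult.commute)
  then show ?thesis
    using False by simp
qed

lemma inc_beta_eq_scaled_integral:
  assumes lam: "lam > 0" and m: "1 \<le> m" and y: "0 < y"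
  shows "inc_beta lam m (y / (y + m)) = m powr (- lam) *
    (\<integral>v. indicator {0<..<m * y / (y + m)} v * (v powr (lam - 1) * (1 - v / m) powr (m - 1)) \<partial>lborel)"
proof -
  define U where "U = y / (y + m)"
  define j where "j = (\<lambda>v. indicator {0<..<m * U} v * (v powr (lam - 1) * (1 - v / m) powr (m - 1)))"
  have U: "0 \<le> U" "U \<le> 1"
    using y m by (auto simp: U_def)
  have j_nonneg: "0 \<le> j v" for v
    by (simp add: j_def indicator_def)
  have j_le: "j v \<le> indicator {0<..<y} v * v powr (lam - 1)" for v
    using scaled_beta_integrand_le[OF m y, of v lam] by (simp add: j_def U_def)
  have "integrable lborel j"
  proof (rule integrable_nonneg_le[OF integrable_indicator_powr[OF lam, of y] _ j_nonneg j_le])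
    show "j \<in> borel_measurable lborel"
      unfolding j_def by measurable
  qed
  then have j_integral: "(\<integral>\<^sup>+v. ennreal (j v) \<partial>lborel) = ennreal (integral\<^sup>L lborel j)"
    using j_nonneg by (intro nn_integral_eq_integral) auto
  have m0: "0 < m"
    using m by simp
  have pointwise: "indicator {0<..<U} (v / m) * ((v / m) powr (lam - 1) * (1 - v / m) powr (m - 1))
      = m powr (1 - lam) * j v" for v
    unfolding j_def by (rule Beta_integrand_rescaled[OF m0])
  have [measurable]: "j \<in> borel_measurable borel"
    unfolding j_def by measurable
  have "ennreal (inc_beta lam m U) = ennreal \<bar>1 / m\<bar> * (\<integral>\<^sup>+v. ennreal (indicator {0<..<U} (0 + 1 / m * v) *
      ((0 + 1 / m * v) powr (lam - 1) * (1 - (0 + 1 / m * v)) powr (m - 1))) \<partial>lborel)"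
    unfolding inc_beta_nn_integral[OF lam m0 U] using m0 by (intro nn_integral_real_affine) auto
  also have "\<dots> = ennreal (1 / m) * (\<integral>\<^sup>+v. ennreal (m powr (1 - lam)) * ennreal (j v) \<partial>lborel)"
    using m0 j_nonneg by (simp add: pointwise ennreal_mult')
  also have "\<dots> = ennreal (1 / m) * (ennreal (m powr (1 - lam)) * ennreal (integral\<^sup>L lborel j))"
    using j_integral by (subst nn_integral_cmult) auto
  also have "\<dots> = ennreal (m powr (- lam) * integral\<^sup>L lborel j)"
    using m0 j_nonneg
    by (simp add: ennreal_mult'[symmetric] Bochner_Integration.integral_nonneg powr_diff powr_minus divide_inverse)
  finally show ?thesis
    using inc_beta_nonneg[OF U, of lam m] j_nonneg m
    by (simp add: Bochner_Integration.integral_nonneg U_def j_def)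
qed

lemma scaled_beta_integrand_LIMSEQ:
  fixes y v lam :: real
  assumes y: "0 < y"
  shows "(\<lambda>n. indicator {0<..<real n * y / (y + real n)} v * (v powr (lam - 1) * (1 - v / real n) powr (real n - 1)))
    \<longlonglongrightarrow> indicator {0<..<y} v * (exp (- v) * v powr (lam - 1))"
proof (cases "0 < v \<and> v < y")
  case True
  have "(\<lambda>n. y / (y * inverse (real n) + 1)) \<longlonglongrightarrow> y / (y * 0 + 1)"
    by (intro tendsto_intros tendsto_inverse_0_at_top filterlim_real_sequentially) simp
  moreover have "eventually (\<lambda>n. y / (y * inverse (real n) + 1) = real n * y / (y + real n)) sequentially"
    using eventually_gt_at_top[of "0::nat"] by eventually_elim (use y in \<open>simp add: field_simps\<close>)
  ultimately have "(\<lambda>n. real n * y / (y + real n)) \<longlonglongrightarrow> y"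
    by (simp add: tendsto_cong)
  then have "eventually (\<lambda>n. v < real n * y / (y + real n)) sequentially"
    using True by (simp add: order_tendsto_iff)
  then have "eventually (\<lambda>n. v powr (lam - 1) * (1 - v / real n) powr (real n - 1)
      = indicator {0<..<real n * y / (y + real n)} v * (v powr (lam - 1) * (1 - v / real n) powr (real n - 1)))
      sequentially"
    by eventually_elim (use True in simp)
  moreover have "(\<lambda>n. v powr (lam - 1) * (1 - v / real n) powr (real n - 1))
      \<longlonglongrightarrow> indicator {0<..<y} v * (exp (- v) * v powr (lam - 1))"
    using True tendsto_mult_left[OF one_minus_div_powr_LIMSEQ[of v], of "v powr (lam - 1)"]
    by (simp add: mult.commute)
  ultimately show ?thesis
    by (rule Lim_transform_eventually[rotated])
next
  case False
  have le_y: "real n * y / (y + real n) \<le> y" for n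
    using y by (simp add: field_simps)
  have "indicator {0<..<real n * y / (y + real n)} v = (0 :: real)" for n
    using False le_y[of n] by (auto simp: indicator_def)
  then show ?thesis
    using False by simp
qed

lemma integral_scaled_beta_integrand_LIMSEQ:
  assumes lam: "lam > 0" and y: "0 < y"
  shows "(\<lambda>n. \<integral>v. indicator {0<..<real n * y / (y + real n)} v *
    (v powr (lam - 1) * (1 - v / real n) powr (real n - 1)) \<partial>lborel) \<longlonglongrightarrow> inc_gamma lam y"
proof -
  define j where "j = (\<lambda>n v. indicator {0<..<real n * y / (y + real n)} v *
    (v powr (lam - 1) * (1 - v / real n) powr (real n - 1)))"
  define j_lim where "j_lim = (\<lambda>v. indicator {0<..<y} v * (exp (- v) * v powr (lam - 1)))"
  have bound: "norm (j n v) \<le> indicator {0<..<y} v * v powr (lam - 1)" for n v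
  proof (cases "n = 0")
    case False
    then show ?thesis
      using scaled_beta_integrand_le[of "real n" y v lam] y by (simp add: j_def indicator_def)
  qed (simp add: j_def indicator_def)
  have pointwise_lim: "(\<lambda>n. j n v) \<longlonglongrightarrow> j_lim v" for v
    unfolding j_def j_lim_def using y by (rule scaled_beta_integrand_LIMSEQ)
  have "(\<lambda>n. integral\<^sup>L lborel (j n)) \<longlonglongrightarrow> integral\<^sup>L lborel j_lim"
  proof (intro integral_dominated_convergence[where w="\<lambda>v. indicator {0<..<y} v * v powr (lam - 1)"] AE_I2)
    show "j_lim \<in> borel_measurable lborel" "j n \<in> borel_measurable lborel" for n
      unfolding j_def j_lim_def by measurable
  qed (use pointwise_lim bound integrable_indicator_powr[OF lam, of y] in auto)
  moreover have "integral\<^sup>L lborel j_lim = inc_gamma lam y"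
    unfolding inc_gamma_def j_lim_def using y
    by (subst interval_integral_Ioo) (auto simp: set_lebesgue_integral_def)
  ultimately show ?thesis
    by (simp add: j_def)
qed

lemma Gamma_ratio_inc_beta_LIMSEQ:
  assumes lam: "lam > 0" and y: "0 < y"
  shows "(\<lambda>n. Gamma (lam + real n) / Gamma (real n) * inc_beta lam (real n) (y / (y + real n)))
    \<longlonglongrightarrow> inc_gamma lam y"
proof -
  have "(\<lambda>n. Gamma (lam + real n) / (Gamma (real n) * real n powr lam) *
      (\<integral>v. indicator {0<..<real n * y / (y + real n)} v *
        (v powr (lam - 1) * (1 - v / real n) powr (real n - 1)) \<partial>lborel)) \<longlonglongrightarrow> 1 * inc_gamma lam y"
    by (intro tendsto_mult Gamma_add_div_Gamma_powr_LIMSEQ integral_scaled_beta_integrand_LIMSEQ lam y)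
  moreover have "eventually (\<lambda>n. Gamma (lam + real n) / (Gamma (real n) * real n powr lam) *
      (\<integral>v. indicator {0<..<real n * y / (y + real n)} v *
        (v powr (lam - 1) * (1 - v / real n) powr (real n - 1)) \<partial>lborel)
      = Gamma (lam + real n) / Gamma (real n) * inc_beta lam (real n) (y / (y + real n))) sequentially"
    using eventually_ge_at_top[of "1::nat"]
  proof eventually_elim
    case (elim n)
    then have "1 \<le> real n"
      by simp
    then show ?case
      by (subst inc_beta_eq_scaled_integral[OF lam _ y]) (simp_all add: powr_minus divide_inverse mult_ac)
  qed
  ultimately show ?thesis
    by (simp add: tendsto_cong)
qed

lemma Gamma_ratio_inc_beta_le_powr:
  assumes lam: "lam > 0" and n: "1 \<le> n" and y: "0 < y"
  shows "Gamma (lam + real n) / Gamma (real n) * inc_beta lam (real n) (y / (y + real n))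
    \<le> Gamma (lam + real n) / (Gamma (real n) * real n powr lam) * (y powr lam / lam)"
proof -
  define u where "u = y / (y + real n)"
  have u: "0 \<le> u" "u \<le> 1" "u \<le> y / real n"
    using y n by (auto simp: u_def intro!: divide_left_mono)
  have R: "0 \<le> Gamma (lam + real n) / Gamma (real n)"
    using lam n by (simp add: less_imp_le)
  have "inc_beta lam (real n) u \<le> (y / real n) powr lam / lam"
    using inc_beta_le_powr[OF lam _ u(1,2)] powr_mono2[OF _ u(1,3), of lam] n lam
    by (smt (verit, best) divide_right_mono of_nat_1 of_nat_mono)
  then have "Gamma (lam + real n) / Gamma (real n) * inc_beta lam (real n) u
      \<le> Gamma (lam + real n) / Gamma (real n) * ((y / real n) powr lam / lam)"
    using R by (rule mult_left_mono)
  also have "\<dots> = Gamma (lam + real n) / (Gamma (real n) * real n powr lam) * (y powr lam / lam)"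
    using y n by (simp add: powr_divide)
  finally show ?thesis
    by (simp add: u_def)
qed

lemma Gamma_ratio_inc_beta_le_Gamma:
  assumes lam: "lam > 0" and n: "1 \<le> n" and y: "0 < y"
  shows "Gamma (lam + real n) / Gamma (real n) * inc_beta lam (real n) (y / (y + real n)) \<le> Gamma lam"
proof -
  have "Gamma (lam + real n) / Gamma (real n) * inc_beta lam (real n) (y / (y + real n))
      \<le> Gamma (lam + real n) / Gamma (real n) * Beta lam (real n)"
    using lam n y by (intro mult_left_mono inc_beta_le_Beta) (auto simp: less_imp_le)
  also have "\<dots> = Gamma lam"
  proof -
    have "0 < Gamma (real n)" "0 < Gamma (lam + real n)"
      using lam n by (simp_all add: Gamma_real_pos)
    then show ?thesis
      by (simp add: Beta_def)
  qed
  finally show ?thesis .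
qed

lemma Gamma_ratio_inc_beta_le_inc_gamma:
  assumes lam: "lam > 0"
  shows "\<exists>C. \<forall>n y. 1 \<le> n \<longrightarrow> 0 < y \<longrightarrow>
    Gamma (lam + real n) / Gamma (real n) * inc_beta lam (real n) (y / (y + real n)) \<le> C * inc_gamma lam y"
proof -
  have "Bseq (\<lambda>n. Gamma (lam + real n) / (Gamma (real n) * real n powr lam))"
    using Gamma_add_div_Gamma_powr_LIMSEQ[OF lam] by (auto intro: convergent_imp_Bseq convergentI)
  then obtain Q where Q: "0 < Q" "\<And>n. \<bar>Gamma (lam + real n) / (Gamma (real n) * real n powr lam)\<bar> \<le> Q"
    by (auto elim!: BseqE)
  define C where "C = max (Q * exp 1) (Gamma lam * lam * exp 1)"
  have C: "Q * exp 1 \<le> C" "Gamma lam * lam * exp 1 \<le> C"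
    by (simp_all add: C_def)
  have "0 < Q * exp 1"
    using Q by simp
  then have C_pos: "0 < C"
    using C(1) by linarith
  have "Gamma (lam + real n) / Gamma (real n) * inc_beta lam (real n) (y / (y + real n)) \<le> C * inc_gamma lam y"
    if n: "1 \<le> n" and y: "0 < y" for n y
  proof (cases "y \<le> 1")
    case True
    have "Gamma (lam + real n) / Gamma (real n) * inc_beta lam (real n) (y / (y + real n))
        \<le> Q * (y powr lam / lam)"
      using Gamma_ratio_inc_beta_le_powr[OF lam n y] Q(2)[of n] lam
      by (smt (verit) abs_le_D1 divide_nonneg_nonneg mult_right_mono powr_ge_zero)
    also have "\<dots> = Q * exp 1 * (exp (- 1) * (min y 1 powr lam / lam))"
      using True by (simp add: exp_minus)
    also have "\<dots> \<le> C * inc_gamma lam y"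
      using inc_gamma_ge_min_powr[OF lam y] Q lam by (intro mult_mono C) (auto simp: less_imp_le[OF C_pos])
    finally show ?thesis .
  next
    case False
    have "Gamma (lam + real n) / Gamma (real n) * inc_beta lam (real n) (y / (y + real n)) \<le> Gamma lam"
      by (rule Gamma_ratio_inc_beta_le_Gamma[OF lam n y])
    also have "\<dots> = Gamma lam * lam * exp 1 * (exp (- 1) * (min y 1 powr lam / lam))"
      using False lam by (simp add: exp_minus)
    also have "\<dots> \<le> C * inc_gamma lam y"
      using inc_gamma_ge_min_powr[OF lam y] lam Gamma_real_pos[OF lam] by (intro mult_mono C) (auto simp: less_imp_le[OF C_pos])
    finally show ?thesis .
  qed
  then show ?thesis
    by blast
qed

section \<open>Laplace transforms are completely monotonic\<close>

lemma powr_mult_exp_le: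
  fixes y r p :: real
  assumes y: "0 \<le> y" and r: "0 < r" and p: "0 < p"
  shows "y powr p * exp (- (r * y)) \<le> (p / r) powr p"
proof -
  have "r * y / p \<le> exp (r * y / p)"
    using exp_ge_add_one_self[of "r * y / p"] by linarith
  then have "(r * y / p) powr p \<le> exp (r * y / p) powr p"
    using r y p by (intro powr_mono2) auto
  also have "exp (r * y / p) powr p = exp (r * y)"
    using p by (simp add: powr_def)
  finally have "(r / p) powr p * y powr p \<le> exp (r * y)"
    using r y p by (simp add: powr_mult[symmetric])
  then have "y powr p \<le> exp (r * y) * (p / r) powr p"
    using r p by (simp add: powr_divide field_simps)
  then have "y powr p * exp (- (r * y)) \<le> exp (r * y) * (p / r) powr p * exp (- (r * y))"
    by (intro mult_right_mono) auto
  also have "\<dots> = (p / r) powr p"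
    by (simp add: exp_minus field_simps)
  finally show ?thesis .
qed

lemma power_mult_exp_le:
  fixes y r :: real
  assumes y: "0 \<le> y" and r: "0 < r"
  shows "y ^ k * exp (- (r * y)) \<le> (real k / r) ^ k"
proof (cases "k = 0 \<or> y = 0")
  case False
  then show ?thesis
    using powr_mult_exp_le[OF y r, of "real k"] y r by (simp add: powr_realpow)
next
  case True
  then show ?thesis
    using r y by (cases "k = 0") auto
qed

lemma abs_exp_minus_one_le:
  fixes z :: real
  shows "\<bar>exp z - 1\<bar> \<le> \<bar>z\<bar> * exp \<bar>z\<bar>"
proof (cases "z \<ge> 0")
  case True
  have "(1 - z) * exp z \<le> exp (- z) * exp z"
    using exp_ge_add_one_self[of "- z"] by (intro mult_right_mono) auto
  then have "exp z - 1 \<le> z * exp z"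
    by (simp add: exp_minus algebra_simps)
  then show ?thesis
    using True by simp
next
  case False
  have "1 + z \<le> exp z" "exp z \<le> 1" "\<bar>z\<bar> \<le> \<bar>z\<bar> * exp \<bar>z\<bar>"
    using False exp_ge_add_one_self[of z] by (auto simp: mult_le_cancel_left1)
  then show ?thesis
    using False by linarith
qed

lemma abs_exp_diff_quotient_le:
  fixes y r s :: real
  assumes s: "0 \<le> s" and r: "0 < r" and y: "\<bar>y - r\<bar> \<le> r / 2" "y \<noteq> r"
  shows "\<bar>(exp (- (y * s)) - exp (- (r * s))) / (y - r)\<bar> \<le> s * exp (- (r / 2 * s))"
proof -
  have "exp (- (y * s)) - exp (- (r * s)) = exp (- (r * s)) * (exp (- ((y - r) * s)) - 1)"
    by (simp add: algebra_simps exp_add[symmetric])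
  then have "\<bar>exp (- (y * s)) - exp (- (r * s))\<bar> = exp (- (r * s)) * \<bar>exp (- ((y - r) * s)) - 1\<bar>"
    by (simp add: abs_mult)
  also have "\<dots> \<le> exp (- (r * s)) * (\<bar>y - r\<bar> * s * exp (\<bar>y - r\<bar> * s))"
    using abs_exp_minus_one_le[of "- ((y - r) * s)"] s by (simp add: abs_mult)
  also have "exp (- (r * s)) * exp (\<bar>y - r\<bar> * s) \<le> exp (- (r / 2 * s))"
    using mult_right_mono[OF y(1) s] by (simp add: exp_add[symmetric] algebra_simps)
  then have "exp (- (r * s)) * (\<bar>y - r\<bar> * s * exp (\<bar>y - r\<bar> * s)) \<le> \<bar>y - r\<bar> * (s * exp (- (r / 2 * s)))"
    using s by (simp add: mult_left_mono mult_ac)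
  finally show ?thesis
    using y(2) by (simp add: abs_divide divide_le_eq mult.commute)
qed

lemma integral_dominated_convergence_at:
  fixes s :: "real \<Rightarrow> 'a \<Rightarrow> 'b::{banach, second_countable_topology}" and w :: "'a \<Rightarrow> real"
  assumes "f \<in> borel_measurable M" "\<And>y. s y \<in> borel_measurable M" "integrable M w"
    and lim: "AE t in M. ((\<lambda>y. s y t) \<longlongrightarrow> f t) (at r)"
    and bound: "\<forall>\<^sub>F y in at r. AE t in M. norm (s y t) \<le> w t"
  shows "((\<lambda>y. integral\<^sup>L M (s y)) \<longlongrightarrow> integral\<^sup>L M f) (at r)"
  unfolding tendsto_at_iff_sequentially
proof (intro allI impI)
  fix X :: "nat \<Rightarrow> real"
  assume "\<forall>i. X i \<in> UNIV - {r}" "X \<longlonglongrightarrow> r"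
  then have X: "filterlim X (at r) sequentially"
    by (simp add: filterlim_at)
  from filterlim_iff[THEN iffD1, OF this, rule_format, OF bound]
  obtain N where N: "\<And>n. N \<le> n \<Longrightarrow> AE t in M. norm (s (X n) t) \<le> w t"
    by (auto simp: eventually_sequentially)
  have "(\<lambda>n. integral\<^sup>L M (s (X (n + N)))) \<longlonglongrightarrow> integral\<^sup>L M f"
  proof (rule integral_dominated_convergence)
    show "AE t in M. (\<lambda>n. s (X (n + N)) t) \<longlonglongrightarrow> f t"
      using lim by eventually_elim (intro LIMSEQ_ignore_initial_segment filterlim_compose[OF _ X])
    show "AE t in M. norm (s (X (n + N)) t) \<le> w t" for n
      by (rule N) simp
  qed (use assms in auto)
  then show "((\<lambda>y. integral\<^sup>L M (s y)) \<circ> X) \<longlonglongrightarrow> integral\<^sup>L M f"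
    unfolding comp_def by (rule LIMSEQ_offset)
qed

lemma has_real_derivative_cong_pos:
  fixes f g :: "real \<Rightarrow> real"
  assumes "\<And>y. 0 < y \<Longrightarrow> f y = g y" "0 < x" "(g has_real_derivative D) (at x)"
  shows "(f has_real_derivative D) (at x)"
proof -
  have "eventually (\<lambda>y. y \<in> {0<..}) (nhds x)"
    by (rule eventually_nhds_in_open) (use assms(2) in auto)
  then have "eventually (\<lambda>y. y \<in> UNIV \<longrightarrow> f y = g y) (nhds x)"
    by eventually_elim (use assms(1) in auto)
  then show ?thesis
    using has_field_derivative_cong_ev[of x x UNIV f g D] assms by simp
qed

lemma deriv_cong_pos:
  fixes f g :: "real \<Rightarrow> real"
  assumes "\<And>y. 0 < y \<Longrightarrow> f y = g y" "0 < x"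
  shows "deriv f x = deriv g x"
proof -
  have "eventually (\<lambda>y. y \<in> {0<..}) (nhds x)"
    by (rule eventually_nhds_in_open) (use assms(2) in auto)
  then have "eventually (\<lambda>y. f y = g y) (nhds x)"
    by eventually_elim (use assms(1) in auto)
  then show ?thesis
    using deriv_cong_ev by blast
qed

lemma higher_deriv_cong_pos:
  fixes f g :: "real \<Rightarrow> real"
  assumes "\<And>y. 0 < y \<Longrightarrow> f y = g y" "0 < x"
  shows "(deriv ^^ k) f x = (deriv ^^ k) g x"
  using assms(2)
proof (induction k arbitrary: x)
  case 0
  then show ?case
    using assms(1) by simp
next
  case (Suc k)
  have "(deriv ^^ Suc k) f x = deriv ((deriv ^^ k) f) x"
    by simp
  also have "\<dots> = deriv ((deriv ^^ k) g) x"
    by (rule deriv_cong_pos[OF Suc.IH Suc.prems])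
  also have "\<dots> = (deriv ^^ Suc k) g x"
    by simp
  finally show ?case .
qed

lemma completely_monotonic_cong_pos:
  assumes eq: "\<And>x. 0 < x \<Longrightarrow> f x = g x" and g: "completely_monotonic g"
  shows "completely_monotonic f"
proof -
  have same: "(deriv ^^ k) f y = (deriv ^^ k) g y" if "0 < y" for k y
    using eq that by (rule higher_deriv_cong_pos)
  have "(deriv ^^ k) f differentiable (at x)" if x: "0 < x" for k x
  proof -
    obtain D where D: "((deriv ^^ k) g has_real_derivative D) (at x)"
      using g x unfolding completely_monotonic_def real_differentiable_def by blast
    have "((deriv ^^ k) f has_real_derivative D) (at x)"
      using same x D by (rule has_real_derivative_cong_pos)
    then show ?thesis
      unfolding real_differentiable_def by blast
  qed
  moreover have "0 \<le> (- 1) ^ k * (deriv ^^ k) f x" if "0 < x" for k x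
    using g that unfolding completely_monotonic_def same[OF that] by blast
  ultimately show ?thesis
    unfolding completely_monotonic_def by blast
qed

lemma completely_monotonic_imp_isCont:
  assumes "completely_monotonic f" "0 < x"
  shows "isCont f x"
proof -
  have "(deriv ^^ 0) f differentiable (at x)"
    using assms unfolding completely_monotonic_def by blast
  then show ?thesis
    by (simp add: differentiable_imp_continuous_within)
qed

context
  fixes N :: "'a measure" and w s :: "'a \<Rightarrow> real"
  assumes w_meas [measurable]: "w \<in> borel_measurable N" and s_meas [measurable]: "s \<in> borel_measurable N"
    and w_nonneg: "\<And>t. 0 \<le> w t" and s_nonneg: "\<And>t. 0 \<le> s t"
    and integrable_laplace: "\<And>r. 0 < r \<Longrightarrow> integrable N (\<lambda>t. w t * exp (- (r * s t)))"
begin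

lemma integrable_laplace_moment:
  assumes r: "0 < r"
  shows "integrable N (\<lambda>t. w t * s t ^ k * exp (- (r * s t)))"
proof (rule integrable_nonneg_le[where g="\<lambda>t. (real k / (r / 2)) ^ k * (w t * exp (- (r / 2 * s t)))"])
  show "integrable N (\<lambda>t. (real k / (r / 2)) ^ k * (w t * exp (- (r / 2 * s t))))"
    using integrable_laplace[of "r / 2"] r by simp
  show "0 \<le> w t * s t ^ k * exp (- (r * s t))" for t
    using w_nonneg s_nonneg by simp
  show "w t * s t ^ k * exp (- (r * s t)) \<le> (real k / (r / 2)) ^ k * (w t * exp (- (r / 2 * s t)))" for t
  proof -
    have "w t * s t ^ k * exp (- (r * s t)) = w t * (s t ^ k * exp (- (r / 2 * s t))) * exp (- (r / 2 * s t))"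
      by (simp add: mult.assoc exp_add[symmetric])
    also have "\<dots> \<le> w t * (real k / (r / 2)) ^ k * exp (- (r / 2 * s t))"
      using power_mult_exp_le[of "s t" "r / 2" k] s_nonneg w_nonneg r
      by (intro mult_right_mono mult_left_mono) auto
    finally show ?thesis
      by (simp add: ac_simps)
  qed
qed measurable

lemma has_real_derivative_laplace_moment:
  assumes r: "0 < r"
  shows "((\<lambda>y. \<integral>t. w t * s t ^ k * exp (- (y * s t)) \<partial>N) has_real_derivative
    - (\<integral>t. w t * s t ^ Suc k * exp (- (r * s t)) \<partial>N)) (at r)"
proof -
  define F where "F y = (\<integral>t. w t * s t ^ k * exp (- (y * s t)) \<partial>N)" for y
  define q where "q y t = w t * s t ^ k * ((exp (- (y * s t)) - exp (- (r * s t))) / (y - r))" for y t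
  have near: "\<forall>\<^sub>F y in at r. \<bar>y - r\<bar> < r / 2 \<and> y \<noteq> r"
    using r by (auto simp: eventually_at dist_real_def intro!: exI[of _ "r / 2"])
  have "((\<lambda>y. integral\<^sup>L N (q y)) \<longlongrightarrow> (\<integral>t. - (w t * s t ^ Suc k * exp (- (r * s t))) \<partial>N)) (at r)"
  proof (rule integral_dominated_convergence_at[where w="\<lambda>t. w t * s t ^ Suc k * exp (- (r / 2 * s t))"])
    show "integrable N (\<lambda>t. w t * s t ^ Suc k * exp (- (r / 2 * s t)))"
      using r by (intro integrable_laplace_moment) simp
    show "AE t in N. ((\<lambda>y. q y t) \<longlongrightarrow> - (w t * s t ^ Suc k * exp (- (r * s t)))) (at r)"
    proof (intro AE_I2)
      fix t
      have "((\<lambda>y. exp (- (y * s t))) has_real_derivative - s t * exp (- (r * s t))) (at r)"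
        by (auto intro!: derivative_eq_intros)
      then have "((\<lambda>y. (exp (- (y * s t)) - exp (- (r * s t))) / (y - r)) \<longlongrightarrow> - s t * exp (- (r * s t))) (at r)"
        by (simp add: has_field_derivative_iff)
      then have "((\<lambda>y. q y t) \<longlongrightarrow> w t * s t ^ k * (- s t * exp (- (r * s t)))) (at r)"
        unfolding q_def by (rule tendsto_mult_left)
      then show "((\<lambda>y. q y t) \<longlongrightarrow> - (w t * s t ^ Suc k * exp (- (r * s t)))) (at r)"
        by (simp add: mult_ac)
    qed
    show "\<forall>\<^sub>F y in at r. AE t in N. norm (q y t) \<le> w t * s t ^ Suc k * exp (- (r / 2 * s t))"
      using near
    proof eventually_elim
      case (elim y)
      have "w t * s t ^ k * \<bar>(exp (- (y * s t)) - exp (- (r * s t))) / (y - r)\<bar>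
          \<le> w t * s t ^ k * (s t * exp (- (r / 2 * s t)))" for t
        using abs_exp_diff_quotient_le[OF s_nonneg r, of y t] elim w_nonneg s_nonneg
        by (intro mult_left_mono) auto
      then show ?case
        using w_nonneg s_nonneg by (intro AE_I2) (simp add: q_def abs_mult mult_ac)
    qed
    show "(\<lambda>t. - (w t * s t ^ Suc k * exp (- (r * s t)))) \<in> borel_measurable N"
      by measurable
    show "q y \<in> borel_measurable N" for y
      unfolding q_def by measurable
  qed
  moreover have "\<forall>\<^sub>F y in at r. integral\<^sup>L N (q y) = (F y - F r) / (y - r)"
    using near
  proof eventually_elim
    case (elim y)
    then have "0 < y"
      by linarith
    have "integral\<^sup>L N (q y) = (\<integral>t. (w t * s t ^ k * exp (- (y * s t))
        - w t * s t ^ k * exp (- (r * s t))) / (y - r) \<partial>N)"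
      unfolding q_def by (intro Bochner_Integration.integral_cong refl) (simp add: algebra_simps)
    also have "\<dots> = (F y - F r) / (y - r)"
      using integrable_laplace_moment[OF \<open>0 < y\<close>, of k] integrable_laplace_moment[OF r, of k]
      by (simp add: F_def integral_divide_zero Bochner_Integration.integral_diff)
    finally show ?case .
  qed
  ultimately have "((\<lambda>y. (F y - F r) / (y - r)) \<longlongrightarrow> - (\<integral>t. w t * s t ^ Suc k * exp (- (r * s t)) \<partial>N)) (at r)"
    by (simp add: tendsto_cong)
  then show ?thesis
    unfolding has_field_derivative_iff F_def .
qed

lemma completely_monotonic_laplace:
  "completely_monotonic (\<lambda>r. \<integral>t. w t * exp (- (r * s t)) \<partial>N)"
proof -
  define L where "L = (\<lambda>k y. (- 1) ^ k * (\<integral>t. w t * s t ^ k * exp (- (y * s t)) \<partial>N))"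
  have L_deriv: "(L k has_real_derivative L (Suc k) x) (at x)" if "0 < x" for k x
    unfolding L_def using DERIV_cmult[OF has_real_derivative_laplace_moment[OF that, of k], of "(- 1) ^ k"]
    by simp
  have higher: "(deriv ^^ k) (L 0) x = L k x" if "0 < x" for k x
    using that
  proof (induction k arbitrary: x)
    case (Suc k)
    have "(deriv ^^ Suc k) (L 0) x = deriv (L k) x"
      using deriv_cong_pos[OF Suc.IH Suc.prems] by simp
    then show ?case
      using DERIV_imp_deriv[OF L_deriv[OF Suc.prems]] by simp
  qed simp
  have "(\<lambda>r. \<integral>t. w t * exp (- (r * s t)) \<partial>N) = L 0"
    by (simp add: L_def fun_eq_iff)
  moreover have "(deriv ^^ k) (L 0) differentiable (at x)" if "0 < x" for k x
    using has_real_derivative_cong_pos[OF higher[where k=k] that L_deriv[OF that]]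
    unfolding real_differentiable_def by blast
  moreover have "0 \<le> (- 1) ^ k * (deriv ^^ k) (L 0) x" if "0 < x" for k x
  proof -
    have "(- 1) ^ k * (deriv ^^ k) (L 0) x = (- 1) ^ k * L k x"
      by (simp only: higher[OF that])
    also have "\<dots> = (\<integral>t. w t * s t ^ k * exp (- (x * s t)) \<partial>N)"
      by (simp add: L_def mult.assoc[symmetric] power_mult_distrib[symmetric])
    finally have "(- 1) ^ k * (deriv ^^ k) (L 0) x = (\<integral>t. w t * s t ^ k * exp (- (x * s t)) \<partial>N)" .
    then show ?thesis
      using w_nonneg s_nonneg by (simp add: Bochner_Integration.integral_nonneg)
  qed
  ultimately show ?thesis
    unfolding completely_monotonic_def by auto
qed

end

section \<open>Tonelli without global \<sigma>-finiteness\<close>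

(* The measure \<mu> of the theorem need not be \<sigma>-finite; its restriction to (0,\<infinity>) is, because
   gamma_kernel lam 1 is integrable and positive there. This is all Tonelli needs. *)

lemma sigma_finite_density_indicator:
  fixes g :: "'a \<Rightarrow> real"
  assumes g: "integrable M g" and A: "A \<in> sets M" and pos: "\<And>t. t \<in> A \<Longrightarrow> 0 < g t"
  shows "sigma_finite_measure (density M (indicator A))"
proof -
  have g_meas [measurable]: "g \<in> borel_measurable M"
    using g by (rule borel_measurable_integrable)
  define D where "D = density M (\<lambda>t. ennreal \<bar>g t\<bar>)"
  have "emeasure D (space D) = (\<integral>\<^sup>+t. ennreal \<bar>g t\<bar> * indicator (space M) t \<partial>M)"
    unfolding D_def by (simp add: emeasure_density)
  also have "\<dots> = (\<integral>\<^sup>+t. ennreal (norm (g t)) \<partial>M)"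
    by (rule nn_integral_cong) simp
  also have "\<dots> < \<infinity>"
    using g unfolding integrable_iff_bounded by (rule conjunct2)
  finally have "emeasure D (space D) \<noteq> \<infinity>"
    by simp
  then interpret D: finite_measure D
    by (rule finite_measureI)
  define h where "h t = ennreal (indicator A t / \<bar>g t\<bar>)" for t
  have h_meas: "h \<in> borel_measurable M"
    unfolding h_def using A by measurable
  then have "sigma_finite_measure (density D h)"
    using D.sigma_finite_iff_density_finite[of h] by (simp add: h_def D_def)
  also have "density D h = density M (\<lambda>t. ennreal \<bar>g t\<bar> * h t)"
    unfolding D_def using h_meas by (intro density_density_eq) simp_all
  also have "(\<lambda>t. ennreal \<bar>g t\<bar> * h t) = indicator A"
  proof
    fix t
    show "ennreal \<bar>g t\<bar> * h t = indicator A t"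
    proof (cases "t \<in> A")
      case True
      then have "\<bar>g t\<bar> * (1 / \<bar>g t\<bar>) = 1"
        using pos[of t] by simp
      then show ?thesis
        using True by (simp add: h_def ennreal_mult'[symmetric])
    qed (simp add: h_def)
  qed
  finally show ?thesis .
qed

lemma nn_integral_swap_of_sigma_finite_restriction:
  fixes F :: "'a \<Rightarrow> 'b \<Rightarrow> ennreal"
  assumes sf: "sigma_finite_measure (density M (indicator A))" and N: "sigma_finite_measure N"
    and A: "A \<in> sets M" and F: "case_prod F \<in> borel_measurable (M \<Otimes>\<^sub>M N)"
    and vanish: "\<And>t r. t \<notin> A \<Longrightarrow> F t r = 0"
  shows "(\<integral>\<^sup>+t. (\<integral>\<^sup>+r. F t r \<partial>N) \<partial>M) = (\<integral>\<^sup>+r. (\<integral>\<^sup>+t. F t r \<partial>M) \<partial>N)"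
proof -
  define D where "D = density M (indicator A)"
  interpret pair_sigma_finite D N
    using sf N by (simp add: pair_sigma_finite_def D_def)
  have sets_D: "sets (D \<Otimes>\<^sub>M N) = sets (M \<Otimes>\<^sub>M N)"
    by (intro sets_pair_measure_cong) (simp_all add: D_def)
  have F_D: "case_prod F \<in> borel_measurable (D \<Otimes>\<^sub>M N)"
    by (subst measurable_cong_sets[OF sets_D refl]) (rule F)
  have restrict: "(\<integral>\<^sup>+t. G t \<partial>M) = (\<integral>\<^sup>+t. G t \<partial>D)"
    if "G \<in> borel_measurable M" "\<And>t. t \<notin> A \<Longrightarrow> G t = 0" for G
    unfolding D_def using that A
    by (subst nn_integral_density) (auto intro!: nn_integral_cong simp: indicator_def)
  have "(\<integral>\<^sup>+t. (\<integral>\<^sup>+r. F t r \<partial>N) \<partial>M) = (\<integral>\<^sup>+t. (\<integral>\<^sup>+r. F t r \<partial>N) \<partial>D)"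
    using sigma_finite_measure.borel_measurable_nn_integral[OF N F] vanish by (intro restrict) auto
  also have "\<dots> = (\<integral>\<^sup>+r. (\<integral>\<^sup>+t. F t r \<partial>D) \<partial>N)"
    using Fubini'[OF F_D] by simp
  also have "\<dots> = (\<integral>\<^sup>+r. (\<integral>\<^sup>+t. F t r \<partial>M) \<partial>N)"
  proof (rule nn_integral_cong)
    fix r
    assume "r \<in> space N"
    then have "(\<lambda>t. F t r) \<in> borel_measurable M"
      using measurable_Pair_compose_split[OF F measurable_ident_sets[OF refl], of "\<lambda>_. r"] by simp
    then show "(\<integral>\<^sup>+t. F t r \<partial>D) = (\<integral>\<^sup>+t. F t r \<partial>M)"
      using vanish by (intro restrict[symmetric]) auto
  qed
  finally show ?thesis .
qed

definition gamma_kernel :: "real \<Rightarrow> real \<Rightarrow> real \<Rightarrow> real" where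
  "gamma_kernel lam x t = indicator {0<..} t * (inc_gamma lam (x * t) / t powr lam)"

definition beta_kernel :: "real \<Rightarrow> nat \<Rightarrow> real \<Rightarrow> real \<Rightarrow> real" where
  "beta_kernel lam n x t = indicator {0<..} t *
    (Gamma (lam + real n) / Gamma (real n) * inc_beta lam (real n) (x / (x + real n / t)) / t powr lam)"

lemma beta_kernel_pos:
  assumes "0 < x" "0 < t"
  shows "beta_kernel lam n x t = Gamma (lam + real n) / Gamma (real n) *
    inc_beta lam (real n) (x * t / (x * t + real n)) / t powr lam"
proof -
  have "x / (x + real n / t) = x * t / (x * t + real n)"
    using assms by (simp add: field_simps)
  then show ?thesis
    using assms by (simp add: beta_kernel_def)
qed

lemma Gamma_ratio_nonneg:
  assumes "0 < lam"
  shows "0 \<le> Gamma (lam + real n) / Gamma (real n)"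
  using assms by (cases "n = 0") (auto simp: less_imp_le)

lemma beta_kernel_nonneg:
  assumes "0 < lam" "0 < x"
  shows "0 \<le> beta_kernel lam n x t"
proof (cases "0 < t")
  case True
  then have "0 < x * t + real n"
    using assms by (simp add: add_pos_nonneg)
  then have "0 \<le> inc_beta lam (real n) (x * t / (x * t + real n))"
    using assms True by (intro inc_beta_nonneg) (auto simp: divide_le_eq)
  then show ?thesis
    unfolding beta_kernel_pos[OF assms(2) True]
    using Gamma_ratio_nonneg[OF assms(1), of n] by (meson divide_nonneg_nonneg mult_nonneg_nonneg powr_ge_zero)
qed (simp add: beta_kernel_def)

lemma beta_kernel_le_gamma_kernel:
  assumes lam: "0 < lam"
  shows "\<exists>C. \<forall>n x t. 1 \<le> n \<longrightarrow> 0 < x \<longrightarrow> beta_kernel lam n x t \<le> C * gamma_kernel lam x t"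
proof -
  obtain C where bound: "\<And>n y. 1 \<le> n \<Longrightarrow> 0 < y \<Longrightarrow>
    Gamma (lam + real n) / Gamma (real n) * inc_beta lam (real n) (y / (y + real n)) \<le> C * inc_gamma lam y"
    using Gamma_ratio_inc_beta_le_inc_gamma[OF lam] by blast
  have "beta_kernel lam n x t \<le> C * gamma_kernel lam x t" if "1 \<le> n" "0 < x" for n x t
  proof (cases "0 < t")
    case True
    then have "Gamma (lam + real n) / Gamma (real n) * inc_beta lam (real n) (x * t / (x * t + real n)) / t powr lam
        \<le> C * inc_gamma lam (x * t) / t powr lam"
      using bound[of n "x * t"] that by (intro divide_right_mono) auto
    then show ?thesis
      using True that by (simp add: beta_kernel_pos gamma_kernel_def)
  qed (simp add: beta_kernel_def gamma_kernel_def)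
  then show ?thesis
    by blast
qed

lemma beta_kernel_LIMSEQ:
  assumes "0 < lam" "0 < x"
  shows "(\<lambda>n. beta_kernel lam n x t) \<longlonglongrightarrow> gamma_kernel lam x t"
proof (cases "0 < t")
  case True
  have "(\<lambda>n. Gamma (lam + real n) / Gamma (real n) * inc_beta lam (real n) (x * t / (x * t + real n)) / t powr lam)
      \<longlonglongrightarrow> inc_gamma lam (x * t) / t powr lam"
    using Gamma_ratio_inc_beta_LIMSEQ[of lam "x * t"] assms True by (intro tendsto_divide) auto
  then show ?thesis
    unfolding beta_kernel_pos[OF assms(2) True] using True by (simp add: gamma_kernel_def)
qed (simp add: beta_kernel_def gamma_kernel_def)

lemma borel_measurable_beta_kernel:
  assumes lam: "0 < lam" and n: "1 \<le> n" and x: "0 < x"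
  shows "beta_kernel lam n x \<in> borel_measurable borel"
proof -
  define B where "B t = indicator {0<..} t * inc_beta lam (real n) (x * t / (x * t + real n))" for t
  have unit: "0 \<le> x * t / (x * t + real n)" "x * t / (x * t + real n) \<le> 1" if "0 < t" for t
  proof -
    have "0 < x * t + real n"
      using that x by (simp add: add_pos_nonneg)
    then show "0 \<le> x * t / (x * t + real n)" "x * t / (x * t + real n) \<le> 1"
      using that x by (simp_all add: divide_le_eq)
  qed
  have "mono B"
  proof (rule monoI)
    fix t1 t2 :: real
    assume "t1 \<le> t2"
    moreover have "x * t1 / (x * t1 + real n) \<le> x * t2 / (x * t2 + real n)" if "0 < t1" "t1 \<le> t2"
    proof -
      have "t1 * real n \<le> t2 * real n"
        using that by (simp add: mult_right_mono)
      then have "x * t1 * (x * t2 + real n) \<le> x * t2 * (x * t1 + real n)"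
        using that x by (simp add: algebra_simps)
      moreover have "0 < x * t1 + real n" "0 < x * t2 + real n"
        using that x by (simp_all add: add_pos_nonneg)
      ultimately show ?thesis
        by (simp add: divide_le_eq le_divide_eq mult.commute mult.left_commute)
    qed
    ultimately show "B t1 \<le> B t2"
      using inc_beta_nonneg[OF unit] inc_beta_mono[OF lam _ unit(1) _ unit(2)] n
      by (auto simp: B_def indicator_def)
  qed
  then have [measurable]: "B \<in> borel_measurable borel"
    by (rule borel_measurable_mono)
  have "beta_kernel lam n x t = Gamma (lam + real n) / Gamma (real n) * B t / t powr lam" for t
  proof (cases "0 < t")
    case True
    then show ?thesis
      by (simp add: B_def beta_kernel_pos[OF x])
  qed (simp add: B_def beta_kernel_def)
  then have "beta_kernel lam n x = (\<lambda>t. Gamma (lam + real n) / Gamma (real n) * B t / t powr lam)"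
    by (rule ext)
  also have "\<dots> \<in> borel_measurable borel"
    by measurable
  finally show ?thesis .
qed

(* mixing_density lam M n is the density \<phi>_n of the representation of f_n: r^(n-1) times the Laplace
   transform of the weight (n/t)^n t^(-\<lambda>) / \<Gamma>(n) d\<mu>(t) at the rate n/t. The rate is set to 0 for t \<le> 0,
   where the weight vanishes. *)

definition mixing_weight :: "real \<Rightarrow> nat \<Rightarrow> real \<Rightarrow> real" where
  "mixing_weight lam n t = indicator {0<..} t * ((real n / t) powr real n / t powr lam / Gamma (real n))"

definition mixing_rate :: "nat \<Rightarrow> real \<Rightarrow> real" where
  "mixing_rate n t = (if 0 < t then real n / t else 0)"

definition mixing_laplace :: "real \<Rightarrow> real measure \<Rightarrow> nat \<Rightarrow> real \<Rightarrow> real" where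
  "mixing_laplace lam M n r = (\<integral>t. mixing_weight lam n t * exp (- (r * mixing_rate n t)) \<partial>M)"

definition mixing_density :: "real \<Rightarrow> real measure \<Rightarrow> nat \<Rightarrow> real \<Rightarrow> real" where
  "mixing_density lam M n r = r powr (real n - 1) * mixing_laplace lam M n r"

lemma borel_measurable_mixing_weight [measurable]: "mixing_weight lam n \<in> borel_measurable borel"
  unfolding mixing_weight_def by measurable

lemma borel_measurable_mixing_rate [measurable]: "mixing_rate n \<in> borel_measurable borel"
  unfolding mixing_rate_def by measurable

lemma mixing_weight_nonneg: "0 \<le> mixing_weight lam n t"
proof -
  have "0 \<le> Gamma (real n)"
    by (cases "n = 0") (simp_all add: Gamma_real_pos less_imp_le)
  then show ?thesis
    by (simp add: mixing_weight_def)
qed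

lemma mixing_rate_nonneg: "0 \<le> mixing_rate n t"
  by (simp add: mixing_rate_def)

lemma mixing_laplace_nonneg: "0 \<le> mixing_laplace lam M n r"
  unfolding mixing_laplace_def by (simp add: mixing_weight_nonneg)

lemma mixing_weight_exp_le_gamma_kernel:
  assumes lam: "0 < lam" and n: "1 \<le> n" and r: "0 < r"
  shows "\<exists>K. \<forall>t. mixing_weight lam n t * exp (- (r * mixing_rate n t)) \<le> K * gamma_kernel lam 1 t"
proof -
  define m where "m = real n"
  have m: "1 \<le> m"
    using n by (simp add: m_def)
  have Gm: "0 < Gamma m"
    using m by simp
  define K where "K = max (m powr m * lam * exp 1 / Gamma m)
    (((m + lam) / r) powr (m + lam) / (m powr lam * Gamma m) * lam * exp 1)"
  have K_nonneg: "0 \<le> K"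
    using Gm lam by (simp add: K_def le_max_iff_disj)
  have "(m / t) powr m / t powr lam / Gamma m * exp (- (r * (m / t))) \<le> K * (inc_gamma lam t / t powr lam)"
    if t: "0 < t" for t
  proof (cases "1 \<le> t")
    case True
    have "(m / t) powr m \<le> m powr m"
      using True m by (intro powr_mono2) (auto simp: divide_le_eq)
    then have "(m / t) powr m / t powr lam / Gamma m * exp (- (r * (m / t))) \<le> m powr m / t powr lam / Gamma m * 1"
      using Gm t r m by (intro mult_mono divide_right_mono) auto
    also have "\<dots> = (m powr m * lam * exp 1 / Gamma m) * (exp (- 1) * (min t 1 powr lam / lam) / t powr lam)"
      using lam True by (simp add: exp_minus field_simps)
    also have "\<dots> \<le> K * (inc_gamma lam t / t powr lam)"
      using K_nonneg inc_gamma_ge_min_powr[OF lam t] t lam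
      by (intro mult_mono divide_right_mono) (auto simp: K_def)
    finally show ?thesis .
  next
    case False
    define z where "z = m / t"
    have z: "0 < z" "t powr lam = m powr lam / z powr lam"
      using m t by (simp_all add: z_def powr_divide)
    have "(m / t) powr m / t powr lam / Gamma m * exp (- (r * (m / t)))
        = z powr m / (m powr lam / z powr lam) / Gamma m * exp (- (r * z))"
      unfolding z_def[symmetric] z(2) ..
    also have "\<dots> = z powr (m + lam) * exp (- (r * z)) / (m powr lam * Gamma m)"
      using z m Gm by (simp add: powr_add field_simps)
    also have "\<dots> \<le> ((m + lam) / r) powr (m + lam) / (m powr lam * Gamma m)"
      using powr_mult_exp_le[of z r "m + lam"] z r m lam Gm by (intro divide_right_mono) auto
    also have "\<dots> = (((m + lam) / r) powr (m + lam) / (m powr lam * Gamma m) * lam * exp 1)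
        * (exp (- 1) * (min t 1 powr lam / lam) / t powr lam)"
      using lam t False by (simp add: exp_minus field_simps)
    also have "\<dots> \<le> K * (inc_gamma lam t / t powr lam)"
      using K_nonneg inc_gamma_ge_min_powr[OF lam t] t lam
      by (intro mult_mono divide_right_mono) (auto simp: K_def)
    finally show ?thesis .
  qed
  then have "mixing_weight lam n t * exp (- (r * mixing_rate n t)) \<le> K * gamma_kernel lam 1 t" for t
    by (cases "0 < t") (auto simp: mixing_weight_def mixing_rate_def gamma_kernel_def m_def mult_ac)
  then show ?thesis
    by blast
qed

lemma borel_measurable_inc_gamma_scaled:
  assumes lam: "0 < lam" and x: "0 < x"
  shows "(\<lambda>r. indicator {0<..} r * inc_gamma lam (x * r)) \<in> borel_measurable borel"
proof (rule borel_measurable_mono, rule monoI)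
  fix r1 r2 :: real
  assume "r1 \<le> r2"
  then show "indicator {0<..} r1 * inc_gamma lam (x * r1) \<le> indicator {0<..} r2 * inc_gamma lam (x * r2)"
    using inc_gamma_mono[OF lam, of "x * r1" "x * r2"] inc_gamma_nonneg[of "x * r2" lam] x
    by (auto simp: indicator_def)
qed

lemma beta_kernel_eq_nn_integral:
  assumes lam: "0 < lam" and n: "1 \<le> n" and x: "0 < x"
  shows "ennreal (beta_kernel lam n x t) = (\<integral>\<^sup>+r. ennreal (indicator {0<..} r * inc_gamma lam (x * r) *
    r powr (real n - 1) * (mixing_weight lam n t * exp (- (r * mixing_rate n t)))) \<partial>lborel)"
proof (cases "0 < t")
  case False
  then show ?thesis
    by (simp add: beta_kernel_def mixing_weight_def)
next
  case t: True
  have [measurable]: "(\<lambda>r. indicator {0<..} r * inc_gamma lam (x * r)) \<in> borel_measurable borel"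
    by (rule borel_measurable_inc_gamma_scaled[OF lam x])
  define s where "s = real n / t"
  define c where "c = 1 / (Gamma (real n) * t powr lam)"
  have n_pos: "0 < real n" and s: "0 < s" and c: "0 \<le> c"
    using n t by (simp_all add: s_def c_def)
  have "beta_kernel lam n x t = c * (Gamma (lam + real n) * inc_beta lam (real n) (x / (x + s)))"
    using t by (simp add: beta_kernel_def c_def s_def)
  then have "ennreal (beta_kernel lam n x t) = ennreal c * ennreal (Gamma (lam + real n) * inc_beta lam (real n) (x / (x + s)))"
    by (simp only: ennreal_mult'[OF c])
  also have "\<dots> = ennreal c * (\<integral>\<^sup>+r. ennreal (indicator {0<..} r * inc_gamma lam (x * r) *
      (s powr real n * r powr (real n - 1) * exp (- (s * r)))) \<partial>lborel)"
    by (simp only: nn_integral_inc_gamma_Gamma_density[OF lam n_pos x s])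
  also have "\<dots> = (\<integral>\<^sup>+r. ennreal (c * (indicator {0<..} r * inc_gamma lam (x * r) *
      (s powr real n * r powr (real n - 1) * exp (- (s * r))))) \<partial>lborel)"
    using c by (subst nn_integral_cmult[symmetric]) (auto simp: ennreal_mult')
  also have "\<dots> = (\<integral>\<^sup>+r. ennreal (indicator {0<..} r * inc_gamma lam (x * r) *
      r powr (real n - 1) * (mixing_weight lam n t * exp (- (r * mixing_rate n t)))) \<partial>lborel)"
    using t by (simp add: c_def s_def mixing_weight_def mixing_rate_def mult_ac)
  finally show ?thesis .
qed

lemma integral_beta_kernel:
  "(\<integral>t. beta_kernel lam n x t \<partial>M) = Gamma (lam + real n) / Gamma (real n) *
    (\<integral>t\<in>{0<..}. inc_beta lam (real n) (x / (x + real n / t)) / t powr lam \<partial>M)"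
  unfolding set_lebesgue_integral_def
  by (subst integral_mult_right_zero[symmetric]) (simp add: beta_kernel_def[abs_def] mult_ac)

locale gamma_kernel_integrable =
  fixes lam :: real and M :: "real measure"
  assumes lam: "0 < lam" and M_borel: "sets M = sets borel"
    and integrable_gamma_kernel: "\<And>x. 0 < x \<Longrightarrow> integrable M (gamma_kernel lam x)"
begin

lemma measurable_M_eq_borel: "measurable M N = measurable borel N"
  using M_borel by (rule measurable_cong_sets) simp

lemma integrable_mixing_laplace_integrand:
  assumes n: "1 \<le> n" and r: "0 < r"
  shows "integrable M (\<lambda>t. mixing_weight lam n t * exp (- (r * mixing_rate n t)))"
proof -
  obtain K where K: "\<And>t. mixing_weight lam n t * exp (- (r * mixing_rate n t)) \<le> K * gamma_kernel lam 1 t"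
    using mixing_weight_exp_le_gamma_kernel[OF lam n r] by blast
  show ?thesis
  proof (rule integrable_nonneg_le[where g="\<lambda>t. K * gamma_kernel lam 1 t"])
    show "integrable M (\<lambda>t. K * gamma_kernel lam 1 t)"
      using integrable_gamma_kernel[of 1] by simp
    show "(\<lambda>t. mixing_weight lam n t * exp (- (r * mixing_rate n t))) \<in> borel_measurable M"
      unfolding measurable_M_eq_borel by measurable
  qed (simp_all add: K mixing_weight_nonneg)
qed

lemma completely_monotonic_mixing_laplace:
  assumes n: "1 \<le> n"
  shows "completely_monotonic (mixing_laplace lam M n)"
  unfolding mixing_laplace_def[abs_def]
proof (rule completely_monotonic_laplace)
  show "mixing_weight lam n \<in> borel_measurable M"
    unfolding measurable_M_eq_borel by (rule borel_measurable_mixing_weight)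
  show "mixing_rate n \<in> borel_measurable M"
    unfolding measurable_M_eq_borel by (rule borel_measurable_mixing_rate)
  show "0 \<le> mixing_weight lam n t" "0 \<le> mixing_rate n t" for t
    by (simp_all add: mixing_weight_nonneg mixing_rate_nonneg)
  show "integrable M (\<lambda>t. mixing_weight lam n t * exp (- (r * mixing_rate n t)))" if "0 < r" for r
    using n that by (rule integrable_mixing_laplace_integrand)
qed

lemma cm_order_mixing_density:
  assumes "1 \<le> n"
  shows "cm_order (1 - real n) (mixing_density lam M n)"
  unfolding cm_order_def
proof (rule completely_monotonic_cong_pos[OF _ completely_monotonic_mixing_laplace[OF assms]])
  fix r :: real
  assume "0 < r"
  then have "r powr (1 - real n) * r powr (real n - 1) = 1"
    by (simp add: powr_add[symmetric])
  then show "r powr (1 - real n) * mixing_density lam M n r = mixing_laplace lam M n r"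
    by (simp add: mixing_density_def mult.assoc[symmetric])
qed

lemma borel_measurable_mixing_density:
  assumes n: "1 \<le> n"
  shows "(\<lambda>r. indicator {0<..} r * mixing_density lam M n r) \<in> borel_measurable borel"
proof -
  have "continuous_on {0<..} (\<lambda>r. r powr (real n - 1))"
    by (intro continuous_intros) auto
  moreover have "continuous_on {0<..} (mixing_laplace lam M n)"
    using completely_monotonic_imp_isCont[OF completely_monotonic_mixing_laplace[OF n]]
    by (intro continuous_at_imp_continuous_on) auto
  ultimately have "continuous_on {0<..} (mixing_density lam M n)"
    unfolding mixing_density_def[abs_def] by (rule continuous_on_mult)
  then show ?thesis
    using borel_measurable_continuous_on_indicator[of "{0<..}" "mixing_density lam M n"] by simp
qed

lemma integrable_beta_kernel:
  assumes n: "1 \<le> n" and x: "0 < x"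
  shows "integrable M (beta_kernel lam n x)"
proof -
  obtain C where C: "\<And>n x t. 1 \<le> n \<Longrightarrow> 0 < x \<Longrightarrow> beta_kernel lam n x t \<le> C * gamma_kernel lam x t"
    using beta_kernel_le_gamma_kernel[OF lam] by blast
  show ?thesis
  proof (rule integrable_nonneg_le[where g="\<lambda>t. C * gamma_kernel lam x t"])
    show "integrable M (\<lambda>t. C * gamma_kernel lam x t)"
      using integrable_gamma_kernel[OF x] by simp
    show "beta_kernel lam n x \<in> borel_measurable M"
      unfolding measurable_M_eq_borel by (rule borel_measurable_beta_kernel[OF lam n x])
  qed (simp_all add: C[OF n x] beta_kernel_nonneg[OF lam x])
qed

lemma integral_beta_kernel_LIMSEQ:
  assumes x: "0 < x"
  shows "(\<lambda>n. \<integral>t. beta_kernel lam n x t \<partial>M) \<longlonglongrightarrow> (\<integral>t. gamma_kernel lam x t \<partial>M)"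
proof -
  obtain C where C: "\<And>n x t. 1 \<le> n \<Longrightarrow> 0 < x \<Longrightarrow> beta_kernel lam n x t \<le> C * gamma_kernel lam x t"
    using beta_kernel_le_gamma_kernel[OF lam] by blast
  have "(\<lambda>n. \<integral>t. beta_kernel lam (Suc n) x t \<partial>M) \<longlonglongrightarrow> (\<integral>t. gamma_kernel lam x t \<partial>M)"
  proof (rule integral_dominated_convergence[where w="\<lambda>t. C * gamma_kernel lam x t"])
    show "gamma_kernel lam x \<in> borel_measurable M"
      using integrable_gamma_kernel[OF x] by (rule borel_measurable_integrable)
    show "beta_kernel lam (Suc n) x \<in> borel_measurable M" for n
      unfolding measurable_M_eq_borel by (rule borel_measurable_beta_kernel[OF lam _ x]) simp
    show "integrable M (\<lambda>t. C * gamma_kernel lam x t)"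
      using integrable_gamma_kernel[OF x] by simp
    show "AE t in M. (\<lambda>n. beta_kernel lam (Suc n) x t) \<longlonglongrightarrow> gamma_kernel lam x t"
      using beta_kernel_LIMSEQ[OF lam x] by (intro AE_I2 LIMSEQ_Suc)
    show "AE t in M. norm (beta_kernel lam (Suc n) x t) \<le> C * gamma_kernel lam x t" for n
      using C[of "Suc n" x] beta_kernel_nonneg[OF lam x] x by (intro AE_I2) simp
  qed
  then show ?thesis
    by (rule LIMSEQ_imp_Suc)
qed

lemma nn_integral_mixing_integrand:
  assumes n: "1 \<le> n" and x: "0 < x"
  shows "(\<integral>\<^sup>+t. ennreal (indicator {0<..} r * inc_gamma lam (x * r) * r powr (real n - 1) *
      (mixing_weight lam n t * exp (- (r * mixing_rate n t)))) \<partial>M)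
    = ennreal (indicator {0<..} r * inc_gamma lam (x * r) * mixing_density lam M n r)"
proof (cases "0 < r")
  case True
  define A where "A = inc_gamma lam (x * r) * r powr (real n - 1)"
  have A: "0 \<le> A"
    using True x by (simp add: A_def inc_gamma_nonneg)
  have "indicator {0<..} r * inc_gamma lam (x * r) * r powr (real n - 1) *
      (mixing_weight lam n t * exp (- (r * mixing_rate n t)))
      = A * (mixing_weight lam n t * exp (- (r * mixing_rate n t)))" for t
    using True by (simp add: A_def mult_ac)
  then have "(\<integral>\<^sup>+t. ennreal (indicator {0<..} r * inc_gamma lam (x * r) * r powr (real n - 1) *
      (mixing_weight lam n t * exp (- (r * mixing_rate n t)))) \<partial>M)
      = (\<integral>\<^sup>+t. ennreal A * ennreal (mixing_weight lam n t * exp (- (r * mixing_rate n t))) \<partial>M)"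
    by (simp only: ennreal_mult'[OF A])
  also have "\<dots> = ennreal A * (\<integral>\<^sup>+t. ennreal (mixing_weight lam n t * exp (- (r * mixing_rate n t))) \<partial>M)"
    by (rule nn_integral_cmult) (unfold measurable_M_eq_borel, measurable)
  also have "\<dots> = ennreal A * ennreal (mixing_laplace lam M n r)"
    unfolding mixing_laplace_def using integrable_mixing_laplace_integrand[OF n True] mixing_weight_nonneg
    by (subst nn_integral_eq_integral) auto
  finally show ?thesis
    using True A mixing_laplace_nonneg by (simp add: A_def mixing_density_def ennreal_mult'[symmetric] mult_ac)
qed simp

lemma nn_integral_beta_kernel_eq_mixing_density:
  assumes n: "1 \<le> n" and x: "0 < x"
  shows "(\<integral>\<^sup>+t. ennreal (beta_kernel lam n x t) \<partial>M)
    = (\<integral>\<^sup>+r. ennreal (indicator {0<..} r * inc_gamma lam (x * r) * mixing_density lam M n r) \<partial>lborel)"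
proof -
  have [measurable]: "(\<lambda>r. indicator {0<..} r * inc_gamma lam (x * r)) \<in> borel_measurable borel"
    by (rule borel_measurable_inc_gamma_scaled[OF lam x])
  define F where "F t r = ennreal (indicator {0<..} r * inc_gamma lam (x * r) * r powr (real n - 1) *
    (mixing_weight lam n t * exp (- (r * mixing_rate n t))))" for t r
  have positive_part: "{0<..} \<in> sets M"
    using M_borel by simp
  have "sigma_finite_measure (density M (indicator {0<..}))"
  proof (rule sigma_finite_density_indicator[OF _ positive_part])
    show "integrable M (gamma_kernel lam 1)"
      by (rule integrable_gamma_kernel) simp
    show "0 < gamma_kernel lam 1 t" if "t \<in> {0<..}" for t
      using that inc_gamma_pos[OF lam, of t] by (simp add: gamma_kernel_def)
  qed
  moreover have "case_prod F \<in> borel_measurable (M \<Otimes>\<^sub>M lborel)"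
  proof -
    have product_sets: "borel_measurable (M \<Otimes>\<^sub>M lborel) = borel_measurable (borel \<Otimes>\<^sub>M borel)"
      by (intro measurable_cong_sets sets_pair_measure_cong) (simp_all add: M_borel)
    show ?thesis
      unfolding product_sets F_def by measurable
  qed
  ultimately have swap: "(\<integral>\<^sup>+t. (\<integral>\<^sup>+r. F t r \<partial>lborel) \<partial>M) = (\<integral>\<^sup>+r. (\<integral>\<^sup>+t. F t r \<partial>M) \<partial>lborel)"
    by (rule nn_integral_swap_of_sigma_finite_restriction[OF _ lborel.sigma_finite_measure_axioms positive_part])
      (simp add: F_def mixing_weight_def)
  have inner: "(\<integral>\<^sup>+t. F t r \<partial>M) = ennreal (indicator {0<..} r * inc_gamma lam (x * r) * mixing_density lam M n r)" for r
    unfolding F_def using n x by (rule nn_integral_mixing_integrand)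
  have "(\<integral>\<^sup>+t. ennreal (beta_kernel lam n x t) \<partial>M) = (\<integral>\<^sup>+t. (\<integral>\<^sup>+r. F t r \<partial>lborel) \<partial>M)"
    unfolding F_def by (simp add: beta_kernel_eq_nn_integral[OF lam n x])
  also have "\<dots> = (\<integral>\<^sup>+r. ennreal (indicator {0<..} r * inc_gamma lam (x * r) * mixing_density lam M n r) \<partial>lborel)"
    by (simp add: swap inner)
  finally show ?thesis .
qed

lemma set_integral_mixing_density_eq_integral_beta_kernel:
  assumes n: "1 \<le> n" and x: "0 < x"
  shows "set_integrable lborel {0<..} (\<lambda>r. inc_gamma lam (x * r) * mixing_density lam M n r)"
    and "(\<integral>r\<in>{0<..}. inc_gamma lam (x * r) * mixing_density lam M n r \<partial>lborel) = (\<integral>t. beta_kernel lam n x t \<partial>M)"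
proof -
  define g where "g = (\<lambda>r. indicator {0<..} r * inc_gamma lam (x * r) * mixing_density lam M n r)"
  have g_nonneg: "0 \<le> g r" for r
    using x mixing_laplace_nonneg by (simp add: g_def mixing_density_def inc_gamma_nonneg indicator_def)
  have [measurable]: "(\<lambda>r. indicator {0<..} r * inc_gamma lam (x * r)) \<in> borel_measurable borel"
    "(\<lambda>r. indicator {0<..} r * mixing_density lam M n r) \<in> borel_measurable borel"
    by (rule borel_measurable_inc_gamma_scaled[OF lam x], rule borel_measurable_mixing_density[OF n])
  have "g = (\<lambda>r. (indicator {0<..} r * inc_gamma lam (x * r)) * (indicator {0<..} r * mixing_density lam M n r))"
    by (auto simp: fun_eq_iff g_def indicator_def)
  then have g_meas: "g \<in> borel_measurable lborel"
    by simp
  have beta_nn: "(\<integral>\<^sup>+t. ennreal (beta_kernel lam n x t) \<partial>M) = ennreal (\<integral>t. beta_kernel lam n x t \<partial>M)"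
    using integrable_beta_kernel[OF n x] beta_kernel_nonneg[OF lam x] by (intro nn_integral_eq_integral) auto
  then have g_nn: "(\<integral>\<^sup>+r. ennreal (g r) \<partial>lborel) = ennreal (\<integral>t. beta_kernel lam n x t \<partial>M)"
    using nn_integral_beta_kernel_eq_mixing_density[OF n x] by (simp add: g_def)
  have g_int: "integrable lborel g"
    using g_meas g_nonneg g_nn by (intro integrableI_nonneg) auto
  then show "set_integrable lborel {0<..} (\<lambda>r. inc_gamma lam (x * r) * mixing_density lam M n r)"
    by (simp add: set_integrable_def g_def mult.assoc)
  have "ennreal (integral\<^sup>L lborel g) = ennreal (\<integral>t. beta_kernel lam n x t \<partial>M)"
    using nn_integral_eq_integral[OF g_int] g_nonneg g_nn by simp
  then have "integral\<^sup>L lborel g = (\<integral>t. beta_kernel lam n x t \<partial>M)"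
    using g_nonneg beta_kernel_nonneg[OF lam x]
    by (simp add: Bochner_Integration.integral_nonneg)
  then show "(\<integral>r\<in>{0<..}. inc_gamma lam (x * r) * mixing_density lam M n r \<partial>lborel) = (\<integral>t. beta_kernel lam n x t \<partial>M)"
    by (simp add: set_lebesgue_integral_def g_def mult.assoc)
qed

lemma thorin_bernstein_beta_kernel:
  assumes a: "0 \<le> a" and b: "0 \<le> b" and n: "1 \<le> n"
    and g: "\<And>x. 0 < x \<Longrightarrow> g x = a * x powr lam + b + (\<integral>t. beta_kernel lam n x t \<partial>M)"
  shows "g \<in> thorin_bernstein lam (1 - real n)"
proof -
  have "\<forall>x>0. set_integrable lborel {0<..} (\<lambda>t. inc_gamma lam (x * t) * mixing_density lam M n t) \<and>
      g x = a * x powr lam + b + (\<integral>t\<in>{0<..}. inc_gamma lam (x * t) * mixing_density lam M n t \<partial>lborel)"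
    using g set_integral_mixing_density_eq_integral_beta_kernel[OF n] by simp
  then show ?thesis
    unfolding thorin_bernstein_def mem_Collect_eq using a b cm_order_mixing_density[OF n]
    by (intro exI[of _ a] exI[of _ b] exI[of _ "mixing_density lam M n"]) simp
qed

end

theorem proposition2p7:
  fixes lam a b :: real and M :: "real measure"
    and f :: "real \<Rightarrow> real" and fn :: "nat \<Rightarrow> real \<Rightarrow> real"
  assumes lam_pos: "lam > 0"
    and a_nonneg: "a \<ge> 0" and b_nonneg: "b \<ge> 0"
    and M_borel: "sets M = sets borel"
    and conv: "\<forall>x>0. set_integrable M {0<..} (\<lambda>t. inc_gamma lam (x * t) / t powr lam)"
    and f_def: "\<forall>x>0. f x = a * x powr lam + b
                  + (\<integral>t\<in>{0<..}. inc_gamma lam (x * t) / t powr lam \<partial>M)"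
    and fn_def: "\<forall>n\<ge>1. \<forall>x>0. fn n x = a * x powr lam + b
                  + Gamma (lam + real n) / Gamma (real n)
                    * (\<integral>t\<in>{0<..}. inc_beta lam (real n) (x / (x + real n / t)) / t powr lam \<partial>M)"
  shows "(\<forall>n\<ge>1. fn n \<in> thorin_bernstein lam (1 - real n))
       \<and> (\<forall>x>0. (\<lambda>n. fn n x) \<longlonglongrightarrow> f x)"
proof -
  have "integrable M (gamma_kernel lam x)" if "0 < x" for x
    using conv that by (simp add: set_integrable_def gamma_kernel_def[abs_def])
  then interpret gamma_kernel_integrable lam M
    using lam_pos M_borel by unfold_locales
  have fn_eq: "fn n x = a * x powr lam + b + (\<integral>t. beta_kernel lam n x t \<partial>M)" if "1 \<le> n" "0 < x" for n x
    using fn_def that by (simp add: integral_beta_kernel)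
  have f_eq: "f x = a * x powr lam + b + (\<integral>t. gamma_kernel lam x t \<partial>M)" if "0 < x" for x
    using f_def that by (simp add: set_lebesgue_integral_def gamma_kernel_def)
  have "fn n \<in> thorin_bernstein lam (1 - real n)" if "1 \<le> n" for n
    using a_nonneg b_nonneg that by (rule thorin_bernstein_beta_kernel) (rule fn_eq[OF that])
  moreover have "(\<lambda>n. fn n x) \<longlonglongrightarrow> f x" if x: "0 < x" for x
  proof -
    have "(\<lambda>n. a * x powr lam + b + (\<integral>t. beta_kernel lam n x t \<partial>M)) \<longlonglongrightarrow> f x"
      unfolding f_eq[OF x] by (intro tendsto_add tendsto_const integral_beta_kernel_LIMSEQ x)
    moreover have "\<forall>\<^sub>F n in sequentially. a * x powr lam + b + (\<integral>t. beta_kernel lam n x t \<partial>M) = fn n x"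
      using eventually_ge_at_top[of 1] by eventually_elim (simp add: fn_eq x)
    ultimately show ?thesis
      by (rule Lim_transform_eventually)
  qed
  ultimately show ?thesis
    by blast
qed

end
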